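(* Let $N_1$ be as in the context (with $t_1\in 4\mathbb Z_{>0}$, $t_2\ge1$). Then: (1) $\Lambda=\big(\sum_{a,b=0}^{3}K_1^aK_2^b\big)\prod_{k=1}^{t_1}X_k\prod_{l=1}^{t_2}Z_l^+\prod_{l=1}^{t_2}Z_l^-$ is a two-sided cointegral, and the linear functional $\lambda$ defined on the monomial basis by $\lambda(\mathbf K^{\mathbf v}\mathbf X^{\mathbf r})=1$ if $\mathbf v=(0,0)$ and $\mathbf r=(1,\dots,1)$, and $0$ otherwise, is a two-sided integral; in particular $N_1$ is unimodular. (2) The element $R_{\mathsf z}=\frac1{16}\sum_{\mathbf v,\mathbf w\in\mathbb Z_4^2}i^{-\mathbf v\cdot\mathbf w}\,\mathbf K^{\mathbf w}\otimes\mathbf K^{\mathbf v\mathsf z}$ with $\mathsf z=\begin{pmatrix}2&3\\1&0\end{pmatrix}$ (where $\mathbf v\mathsf z$ is the row vector $\mathbf v$ times $\mathsf z$) is a triangular R-matrix on $N_1$, i.e. an R-matrix with $(R_{\mathsf z})_{21}R_{\mathsf z}=1\otimes1$. (3) With this R-matrix, $v=1$ is a ribbon element, and $v=g^{-1}u$ with $g=K_1^2$, where $u$ is the Drinfeld element.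
   Context: $H(\mathbf m,t,\mathsf d,\mathsf u)$: for a tuple $\mathbf m$ of positive integers, $t\ge1$ and integer $t\times s$ matrices $\mathsf d,\mathsf u$ with rows $\mathsf d_k,\mathsf u_k$, with $\xi_a=e^{2\pi i/m_a}$, $\boldsymbol\xi^{\mathbf v\cdot\mathbf w}=\prod_a\xi_a^{v_aw_a}$, $\mathbf K^{\mathbf v}=K_1^{v_1}\cdots K_s^{v_s}$, and assuming $\boldsymbol\xi^{\mathsf d_k\cdot\mathsf u_l}\boldsymbol\xi^{\mathsf d_l\cdot\mathsf u_k}=1$, $\boldsymbol\xi^{\mathsf d_k\cdot\mathsf u_k}=-1$, it is the complex Hopf algebra generated by $K_1,\dots,K_s,X_1,\dots,X_t$ with relations $K_a^{m_a}=1$, $K_aK_b=K_bK_a$, $K_aX_k=\xi_a^{d_{ka}}X_kK_a$, $X_k^2=0$, $X_lX_k=\boldsymbol\xi^{\mathsf d_k\cdot\mathsf u_l}X_kX_l$, $\Delta(K_a)=K_a\otimes K_a$, $\Delta(X_k)=1\otimes X_k+X_k\otimes\mathbf K^{\mathsf u_k}$, $\epsilon(K_a)=1$, $\epsilon(X_k)=0$, $S(K_a)=K_a^{-1}$, $S(X_k)=-X_k\mathbf K^{-\mathsf u_k}$. Its monomial basis is $\{\mathbf K^{\mathbf v}\mathbf X^{\mathbf r}\}$, $\mathbf v\in\mathbb Z_{\mathbf m}$, $\mathbf r\in\{0,1\}^t$, $\mathbf X^{\mathbf r}=X_1^{r_1}\cdots X_t^{r_t}$. $N_1$ is $H(\mathbf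 m,t,\mathsf d,\mathsf u)$ with $\mathbf m=(4,4)$ (so $\xi_1=\xi_2=i$), $t=t_1+2t_2$, $t_1\in4\mathbb Z_{>0}$, $t_2\ge1$, whose nilpotent generators are, in order, $X_1,\dots,X_{t_1}$ with rows $\mathsf d=(1,1)$, $\mathsf u=(1,1)$, followed by pairs $Z_l^+,Z_l^-$ ($l=1,\dots,t_2$) with rows $\mathsf d=(1,0),\mathsf u=(2,1)$ for $Z_l^+$ and $\mathsf d=(-1,0),\mathsf u=(-2,-1)$ for $Z_l^-$. Cointegral: $\Lambda$ with $h\Lambda=\Lambda h=\epsilon(h)\Lambda$. Two-sided integral: $\lambda\in H^*$ with $\sum\lambda(h_{(1)})h_{(2)}=\lambda(h)1=\sum h_{(1)}\lambda(h_{(2)})$. R-matrix: invertible $R=\sum R'\otimes R''$ with $\Delta^{\mathrm{cop}}(h)R=R\Delta(h)$, $(\Delta\otimes\mathrm{id})R=R_{13}R_{23}$, $(\mathrm{id}\otimes\Delta)R=R_{13}R_{12}$. Drinfeld element $u=\sum S(R'')R'$. A ribbon element is a central invertible $v$ with $v^2=uS(u)$, $S(v)=v$, $\epsilon(v)=1$, $\Delta(v)=(R_{21}R)^{-1}(v\otimes v)$. *)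

theory Defs
  imports Complex_Main
begin

section \<open>Concrete model of H(m,t,d,u) for m = (4,4) (so xi_1 = xi_2 = i)\<close>

text \<open>Basis index: ((v1,v2), r) standing for the monomial K_1^v1 K_2^v2 X^r, where
  v1,v2 in {0..3} and r is the set of indices k < t with r_k = 1 (generators X_0..X_(t-1),
  0-based).  Elements of H are coefficient functions vanishing off the basis; elements of
  H (x) H and H (x) H (x) H are coefficient functions on pairs / triples of basis indices.\<close>

type_synonym idx = "(int \<times> int) \<times> nat set"
type_synonym elt = "idx \<Rightarrow> complex"
type_synonym elt2 = "idx \<times> idx \<Rightarrow> complex"
type_synonym elt3 = "idx \<times> idx \<times> idx \<Rightarrow> complex"
type_synonym vecs = "nat \<Rightarrow> int \<times> int"

definition dot :: "int \<times> int \<Rightarrow> int \<times> int \<Rightarrow> int" where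
  "dot v w = fst v * fst w + snd v * snd w"

definition md :: "int \<times> int \<Rightarrow> int \<times> int" where
  "md v = (fst v mod 4, snd v mod 4)"

definition vadd :: "int \<times> int \<Rightarrow> int \<times> int \<Rightarrow> int \<times> int" where
  "vadd v w = (fst v + fst w, snd v + snd w)"

definition ip :: "int \<Rightarrow> complex" where
  "ip n = \<i> ^ nat (n mod 4)"

definition basis :: "nat \<Rightarrow> idx set" where
  "basis t = {((a,b),r). a \<in> {0..3} \<and> b \<in> {0..3} \<and> r \<subseteq> {0..<t}}"

definition carrier :: "nat \<Rightarrow> elt set" where
  "carrier t = {f. \<forall>x. x \<notin> basis t \<longrightarrow> f x = 0}"

definition carrier2 :: "nat \<Rightarrow> elt2 set" where
  "carrier2 t = {F. \<forall>p. p \<notin> basis t \<times> basis t \<longrightarrow> F p = 0}"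

definition bvec :: "idx \<Rightarrow> elt" where
  "bvec x = (\<lambda>y. if y = x then 1 else 0)"

definition oneI :: idx where "oneI = ((0,0), {})"

definition one :: elt where "one = bvec oneI"

definition Kpow :: "int \<times> int \<Rightarrow> elt" where
  "Kpow v = bvec (md v, {})"

definition Xgen :: "nat \<Rightarrow> elt" where
  "Xgen k = bvec ((0,0), {k})"

definition smul :: "complex \<Rightarrow> elt \<Rightarrow> elt" where
  "smul c f = (\<lambda>x. c * f x)"

text \<open>Product of basis monomials:
  (K^v X^r)(K^w X^s) = coefficient * K^(v+w) X^(r \<union> s), obtained from the relations
  X_k K^w = i^(-d_k.w) K^w X_k, X_k^2 = 0 and X_l X_k = i^(d_k.u_l) X_k X_l.\<close>
definition mcoef :: "vecs \<Rightarrow> vecs \<Rightarrow> idx \<Rightarrow> idx \<Rightarrow> complex" where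
  "mcoef d u b1 b2 = (case b1 of (v, r) \<Rightarrow> case b2 of (w, s) \<Rightarrow>
     if r \<inter> s \<noteq> {} then 0 else
       (\<Prod>k\<in>r. ip (- dot (d k) w)) *
       (\<Prod>l\<in>r. \<Prod>k\<in>{k\<in>s. k < l}. ip (dot (d k) (u l))))"

definition mres :: "idx \<Rightarrow> idx \<Rightarrow> idx" where
  "mres b1 b2 = (md (vadd (fst b1) (fst b2)), snd b1 \<union> snd b2)"

definition mc :: "vecs \<Rightarrow> vecs \<Rightarrow> idx \<Rightarrow> idx \<Rightarrow> idx \<Rightarrow> complex" where
  "mc d u b1 b2 x = (if mres b1 b2 = x then mcoef d u b1 b2 else 0)"

definition mult :: "nat \<Rightarrow> vecs \<Rightarrow> vecs \<Rightarrow> elt \<Rightarrow> elt \<Rightarrow> elt" where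
  "mult t d u f g = (\<lambda>x. if x \<in> basis t then
     (\<Sum>b1\<in>basis t. \<Sum>b2\<in>basis t. f b1 * g b2 * mc d u b1 b2 x) else 0)"

definition mult2 :: "nat \<Rightarrow> vecs \<Rightarrow> vecs \<Rightarrow> elt2 \<Rightarrow> elt2 \<Rightarrow> elt2" where
  "mult2 t d u F G = (\<lambda>(x, y). if x \<in> basis t \<and> y \<in> basis t then
     (\<Sum>p\<in>basis t \<times> basis t. \<Sum>q\<in>basis t \<times> basis t.
        F p * G q * mc d u (fst p) (fst q) x * mc d u (snd p) (snd q) y) else 0)"

definition mult3 :: "nat \<Rightarrow> vecs \<Rightarrow> vecs \<Rightarrow> elt3 \<Rightarrow> elt3 \<Rightarrow> elt3" where
  "mult3 t d u F G = (\<lambda>(x, y, z). if x \<in> basis t \<and> y \<in> basis t \<and> z \<in> basis t then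
     (\<Sum>p\<in>basis t \<times> basis t \<times> basis t. \<Sum>q\<in>basis t \<times> basis t \<times> basis t.
        F p * G q * mc d u (fst p) (fst q) x * mc d u (fst (snd p)) (fst (snd q)) y
          * mc d u (snd (snd p)) (snd (snd q)) z) else 0)"

definition tens :: "elt \<Rightarrow> elt \<Rightarrow> elt2" where
  "tens f g = (\<lambda>(x, y). f x * g y)"

definition one2 :: elt2 where "one2 = tens one one"

definition flip :: "elt2 \<Rightarrow> elt2" where
  "flip F = (\<lambda>(x, y). F (y, x))"

text \<open>Coproduct: Delta(K^v X^r) = Delta(K^v) Delta(X_(r_1)) ... Delta(X_(r_p)) with
  Delta(K^v) = K^v (x) K^v and Delta(X_k) = 1 (x) X_k + X_k (x) K^(u_k).\<close>
definition DeltaX :: "vecs \<Rightarrow> nat \<Rightarrow> elt2" where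
  "DeltaX u k = (\<lambda>p. tens one (Xgen k) p + tens (Xgen k) (Kpow (u k)) p)"

definition Deltab :: "nat \<Rightarrow> vecs \<Rightarrow> vecs \<Rightarrow> idx \<Rightarrow> elt2" where
  "Deltab t d u b = foldl (\<lambda>acc k. mult2 t d u acc (DeltaX u k))
      (tens (Kpow (fst b)) (Kpow (fst b))) (sorted_list_of_set (snd b))"

definition Delta :: "nat \<Rightarrow> vecs \<Rightarrow> vecs \<Rightarrow> elt \<Rightarrow> elt2" where
  "Delta t d u f = (\<lambda>p. \<Sum>b\<in>basis t. f b * Deltab t d u b p)"

definition counit :: "nat \<Rightarrow> elt \<Rightarrow> complex" where
  "counit t f = (\<Sum>b\<in>basis t. f b * (if snd b = {} then 1 else 0))"

text \<open>Antipode: S(K^v X^r) = S(X_(r_p)) ... S(X_(r_1)) K^(-v),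
  S(X_k) = - X_k K^(-u_k).\<close>
definition SX :: "nat \<Rightarrow> vecs \<Rightarrow> vecs \<Rightarrow> nat \<Rightarrow> elt" where
  "SX t d u k = smul (-1) (mult t d u (Xgen k) (Kpow (- fst (u k), - snd (u k))))"

definition Sb :: "nat \<Rightarrow> vecs \<Rightarrow> vecs \<Rightarrow> idx \<Rightarrow> elt" where
  "Sb t d u b = mult t d u
      (foldl (\<lambda>acc k. mult t d u acc (SX t d u k)) one (rev (sorted_list_of_set (snd b))))
      (Kpow (- fst (fst b), - snd (fst b)))"

definition antipode :: "nat \<Rightarrow> vecs \<Rightarrow> vecs \<Rightarrow> elt \<Rightarrow> elt" where
  "antipode t d u f = (\<lambda>x. \<Sum>b\<in>basis t. f b * Sb t d u b x)"

definition two_sided_cointegral :: "nat \<Rightarrow> vecs \<Rightarrow> vecs \<Rightarrow> elt \<Rightarrow> bool" where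
  "two_sided_cointegral t d u L \<longleftrightarrow> L \<in> carrier t \<and>
     (\<forall>h\<in>carrier t. mult t d u h L = smul (counit t h) L \<and>
                     mult t d u L h = smul (counit t h) L)"

text \<open>A linear functional on H is given by its values on the monomial basis.\<close>
definition ap :: "nat \<Rightarrow> (idx \<Rightarrow> complex) \<Rightarrow> elt \<Rightarrow> complex" where
  "ap t lam h = (\<Sum>b\<in>basis t. lam b * h b)"

definition two_sided_integral :: "nat \<Rightarrow> vecs \<Rightarrow> vecs \<Rightarrow> (idx \<Rightarrow> complex) \<Rightarrow> bool" where
  "two_sided_integral t d u lam \<longleftrightarrow>
     (\<forall>h\<in>carrier t.
        (\<lambda>x. \<Sum>b\<in>basis t. lam b * Delta t d u h (b, x)) = smul (ap t lam h) one \<and>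
        (\<lambda>x. \<Sum>b\<in>basis t. Delta t d u h (x, b) * lam b) = smul (ap t lam h) one)"

definition unimodular :: "nat \<Rightarrow> vecs \<Rightarrow> vecs \<Rightarrow> bool" where
  "unimodular t d u \<longleftrightarrow> (\<exists>L. L \<noteq> (\<lambda>_. 0) \<and> two_sided_cointegral t d u L)"

definition leg13 :: "elt2 \<Rightarrow> elt3" where
  "leg13 F = (\<lambda>(x, y, z). F (x, z) * one y)"
definition leg23 :: "elt2 \<Rightarrow> elt3" where
  "leg23 F = (\<lambda>(x, y, z). one x * F (y, z))"
definition leg12 :: "elt2 \<Rightarrow> elt3" where
  "leg12 F = (\<lambda>(x, y, z). F (x, y) * one z)"

definition Delta_id :: "nat \<Rightarrow> vecs \<Rightarrow> vecs \<Rightarrow> elt2 \<Rightarrow> elt3" where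
  "Delta_id t d u F = (\<lambda>(x, y, z). \<Sum>a\<in>basis t. F (a, z) * Deltab t d u a (x, y))"
definition id_Delta :: "nat \<Rightarrow> vecs \<Rightarrow> vecs \<Rightarrow> elt2 \<Rightarrow> elt3" where
  "id_Delta t d u F = (\<lambda>(x, y, z). \<Sum>c\<in>basis t. F (x, c) * Deltab t d u c (y, z))"

definition R_matrix :: "nat \<Rightarrow> vecs \<Rightarrow> vecs \<Rightarrow> elt2 \<Rightarrow> bool" where
  "R_matrix t d u R \<longleftrightarrow> R \<in> carrier2 t \<and>
     (\<exists>R'\<in>carrier2 t. mult2 t d u R R' = one2 \<and> mult2 t d u R' R = one2) \<and>
     (\<forall>h\<in>carrier t. mult2 t d u (flip (Delta t d u h)) R = mult2 t d u R (Delta t d u h)) \<and>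
     Delta_id t d u R = mult3 t d u (leg13 R) (leg23 R) \<and>
     id_Delta t d u R = mult3 t d u (leg13 R) (leg12 R)"

definition triangular_R_matrix :: "nat \<Rightarrow> vecs \<Rightarrow> vecs \<Rightarrow> elt2 \<Rightarrow> bool" where
  "triangular_R_matrix t d u R \<longleftrightarrow> R_matrix t d u R \<and> mult2 t d u (flip R) R = one2"

text \<open>Drinfeld element u = sum S(R'') R'.\<close>
definition drinfeld :: "nat \<Rightarrow> vecs \<Rightarrow> vecs \<Rightarrow> elt2 \<Rightarrow> elt" where
  "drinfeld t d u R = (\<lambda>x. \<Sum>a\<in>basis t. \<Sum>b\<in>basis t.
      R (a, b) * mult t d u (Sb t d u b) (bvec a) x)"

definition ribbon_element :: "nat \<Rightarrow> vecs \<Rightarrow> vecs \<Rightarrow> elt2 \<Rightarrow> elt \<Rightarrow> bool" where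
  "ribbon_element t d u R v \<longleftrightarrow> v \<in> carrier t \<and>
     (\<forall>h\<in>carrier t. mult t d u v h = mult t d u h v) \<and>
     (\<exists>w\<in>carrier t. mult t d u v w = one \<and> mult t d u w v = one) \<and>
     mult t d u v v = mult t d u (drinfeld t d u R) (antipode t d u (drinfeld t d u R)) \<and>
     antipode t d u v = v \<and> counit t v = 1 \<and>
     (\<exists>Y\<in>carrier2 t. mult2 t d u Y (mult2 t d u (flip R) R) = one2 \<and>
                     mult2 t d u (mult2 t d u (flip R) R) Y = one2 \<and>
                     Delta t d u v = mult2 t d u Y (tens v v))"

text \<open>Generators (0-based): X_1..X_(t1) are indices 0..t1-1; then the pairs
  Z_l^+ (index t1+2(l-1)) and Z_l^- (index t1+2(l-1)+1), l = 1..t2.\<close>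
definition tN1 :: "nat \<Rightarrow> nat \<Rightarrow> nat" where "tN1 t1 t2 = t1 + 2 * t2"

definition dN1 :: "nat \<Rightarrow> vecs" where
  "dN1 t1 k = (if k < t1 then (1,1) else if even (k - t1) then (1,0) else (-1,0))"

definition uN1 :: "nat \<Rightarrow> vecs" where
  "uN1 t1 k = (if k < t1 then (1,1) else if even (k - t1) then (2,1) else (-2,-1))"

definition Zp :: "nat \<Rightarrow> nat \<Rightarrow> nat" where "Zp t1 l = t1 + 2 * (l - 1)"
definition Zm :: "nat \<Rightarrow> nat \<Rightarrow> nat" where "Zm t1 l = t1 + 2 * (l - 1) + 1"

definition LambdaN1 :: "nat \<Rightarrow> nat \<Rightarrow> elt" where
  "LambdaN1 t1 t2 = foldl (\<lambda>acc k. mult (tN1 t1 t2) (dN1 t1) (uN1 t1) acc (Xgen k))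
      (\<lambda>x. \<Sum>a\<in>{0..3::int}. \<Sum>b\<in>{0..3::int}. Kpow (a, b) x)
      ([0..<t1] @ map (Zp t1) [1..<t2+1] @ map (Zm t1) [1..<t2+1])"

definition lambdaN1 :: "nat \<Rightarrow> nat \<Rightarrow> idx \<Rightarrow> complex" where
  "lambdaN1 t1 t2 x = (if x = ((0,0), {0..<tN1 t1 t2}) then 1 else 0)"

text \<open>R_z = 1/16 sum_{v,w} i^(-v.w) K^w (x) K^(v z), z = [[2,3],[1,0]],
  so v z = (2 v1 + v2, 3 v1).\<close>
definition Rz :: elt2 where
  "Rz = (\<lambda>(x, y). (1/16) * (\<Sum>v\<in>{0..3::int} \<times> {0..3::int}. \<Sum>w\<in>{0..3::int} \<times> {0..3::int}.
      ip (- dot v w) * Kpow w x * Kpow (2 * fst v + snd v, 3 * fst v) y))"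

end

theory Submission
  imports Defs "HOL-Number_Theory.Cong"
begin

(* Both extreme monomials are rigid: multiplying
   (sum_a K^a) X_1 ... X_t by any K^v or X_k reproduces it or kills it (the K-action on the full
   product X_1 ... X_t is the character K^w |-> i^(-sum_k d_k.w), trivial since the d_k sum to
   (t1,t1) with 4 | t1), which gives the cointegral; dually, the closed form of Delta(K^v X^r) as
   a sum over subsets S of r shows that only the top monomial K^0 X_1...X_t contributes to the
   integral, using that the u_k sum to 0 mod 4.

   R_z lies in C[Z_4^2] (x) C[Z_4^2]; summing out v turns it into
   sum_(a,b) i^(-beta(a,b)) K^a (x) K^b / 16 with the bilinear form
   beta(a,b) = 3 a1 b2 + a2 b1 + 2 a2 b2 (rform below).  Invertibility, triangularity and the
   hexagon axioms reduce to character sums over Z_4^2, using that beta(a,b) + beta(b,a) is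
   divisible by 4.  Quasi-cocommutativity holds because beta is adapted to the data of N_1:
   beta(x,u_k) = -d_k.x and beta(u_k,x) = d_k.x mod 4, which makes R_z commute past every summand
   of the coproduct formula.  Finally the Drinfeld element is u = K_1^2, so u S(u) = 1 and v = 1. *)

(* HOL-Number_Theory.Cong pulls in Multiset, whose mult would otherwise capture the product of Defs. *)
hide_const (open) Multiset.mult

section \<open>Powers of i\<close>

lemma i_pow_mod4: "\<i> ^ n = \<i> ^ (n mod 4)"
proof -
  have "\<i> ^ n = \<i> ^ (4 * (n div 4) + n mod 4)" by (simp only: mult_div_mod_eq)
  also have "\<dots> = (\<i> ^ 4) ^ (n div 4) * \<i> ^ (n mod 4)" by (simp only: power_add power_mult)
  also have "\<dots> = \<i> ^ (n mod 4)" by simp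
  finally show ?thesis .
qed

lemma ip_cong: "[a = b] (mod 4) \<Longrightarrow> ip a = ip b"
  by (simp add: ip_def cong_def)

lemma ip_add: "ip a * ip b = ip (a + b)"
proof -
  have "ip a * ip b = \<i> ^ (nat (a mod 4) + nat (b mod 4))" by (simp add: ip_def power_add)
  also have "\<dots> = \<i> ^ ((nat (a mod 4) + nat (b mod 4)) mod 4)" by (rule i_pow_mod4)
  also have "(nat (a mod 4) + nat (b mod 4)) mod 4 = nat ((a + b) mod 4)"
  proof -
    have "(nat (a mod 4) + nat (b mod 4)) = nat (a mod 4 + b mod 4)" by (simp add: nat_add_distrib)
    moreover have "nat (a mod 4 + b mod 4) mod 4 = nat ((a mod 4 + b mod 4) mod 4)"
      by (simp add: nat_mod_distrib)
    ultimately show ?thesis by (simp add: mod_add_eq)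
  qed
  finally show ?thesis by (simp add: ip_def)
qed

lemma ip_zero[simp]: "ip 0 = 1" by (simp add: ip_def)

lemma ip_nonzero[simp]: "ip a \<noteq> 0" by (simp add: ip_def)

lemma ip_prod: "finite A \<Longrightarrow> (\<Prod>k\<in>A. ip (f k)) = ip (\<Sum>k\<in>A. f k)"
  by (induction A rule: finite_induct) (simp_all add: ip_add)

lemma ip_small: "ip 1 = \<i>" "ip 2 = -1" "ip 3 = - \<i>"
  by (simp_all add: ip_def power2_eq_square power3_eq_cube)

lemma sum_ip_mult: "(\<Sum>j\<in>{0..3::int}. ip (c * j)) = (if c mod 4 = 0 then 4 else 0)"
proof -
  have s: "{0..3::int} = {0, 1, 2, 3}" by auto
  have "(\<Sum>j\<in>{0..3::int}. ip (c * j)) = ip 0 + ip c + ip (2 * c) + ip (3 * c)"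
    unfolding s by (simp add: mult.commute)
  also have "\<dots> = ip 0 + ip (c mod 4) + ip (2 * (c mod 4)) + ip (3 * (c mod 4))"
    by (intro arg_cong2[where f="(+)"] ip_cong refl) (simp_all add: cong_def mod_mult_right_eq)
  also have "\<dots> = (if c mod 4 = 0 then 4 else 0)"
  proof -
    have "c mod 4 \<in> {0, 1, 2, 3}" by auto
    then show ?thesis by (auto simp: ip_small ip_def power3_eq_cube)
  qed
  finally show ?thesis .
qed

section \<open>The group \<int>/4 \<times> \<int>/4\<close>

definition Z4sq :: "(int \<times> int) set" where "Z4sq = {0..3} \<times> {0..3}"

lemma finite_Z4sq[simp]: "finite Z4sq" by (simp add: Z4sq_def)

lemma Z4sq_explicit: "Z4sq = {0,1,2,3} \<times> {0,1,2,3}"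
proof -
  have "{0..3::int} = {0,1,2,3}" by auto
  then show ?thesis by (simp add: Z4sq_def)
qed

lemma zero_in_Z4sq[simp]: "(0::int, 0::int) \<in> Z4sq" by (simp add: Z4sq_def)

lemma md_in_Z4sq[simp]: "md v \<in> Z4sq"
  unfolding Z4sq_def md_def by (simp; presburger)

lemma md_id: "v \<in> Z4sq \<Longrightarrow> md v = v"
  by (cases v) (auto simp: Z4sq_def md_def)

lemma md_md[simp]: "md (md v) = md v" by (simp add: md_def)

lemma md_vadd_md_left[simp]: "md (vadd (md a) b) = md (vadd a b)"
  by (simp add: md_def vadd_def mod_add_left_eq mod_diff_left_eq)

lemma md_vadd_md_right[simp]: "md (vadd a (md b)) = md (vadd a b)"
  by (simp add: md_def vadd_def mod_add_right_eq)

lemma vadd_assoc: "vadd (vadd a b) c = vadd a (vadd b c)" by (simp add: vadd_def)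

lemma vadd_comm: "vadd a b = vadd b a" by (simp add: vadd_def)

lemma vadd_zero[simp]: "vadd a (0,0) = a" "vadd (0,0) a = a" by (simp_all add: vadd_def)

definition vneg :: "int \<times> int \<Rightarrow> int \<times> int" where "vneg v = (- fst v, - snd v)"

definition vsub :: "int \<times> int \<Rightarrow> int \<times> int \<Rightarrow> int \<times> int" where "vsub a b = vadd a (vneg b)"

lemma md_vadd_rotate: "md (vadd (md (vadd a b)) c) = md (vadd (md (vadd c a)) b)"
  by (simp only: md_vadd_md_left) (simp add: vadd_def algebra_simps)

lemma md_vadd_vneg_cancel: "md (vadd (md (vadd (vneg U) b)) (md (vadd v U))) = md (vadd v b)"
  by (simp only: md_vadd_md_left md_vadd_md_right) (simp add: vadd_def vneg_def algebra_simps)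

lemma md_vsub_vadd: "b \<in> Z4sq \<Longrightarrow> md (vsub (md (vadd a b)) a) = b"
  by (cases a, cases b) (simp add: vsub_def md_def vadd_def vneg_def md_id[unfolded md_def] mod_diff_left_eq Z4sq_def)

lemma md_vsub_eq_0_iff: "x \<in> Z4sq \<Longrightarrow> q \<in> Z4sq \<Longrightarrow> md (vsub x q) = (0,0) \<longleftrightarrow> q = x"
proof -
  assume x: "x \<in> Z4sq" and q: "q \<in> Z4sq"
  obtain x1 x2 q1 q2 where xq: "x = (x1, x2)" "q = (q1, q2)" by (cases x, cases q)
  have r: "0 \<le> x1" "x1 \<le> 3" "0 \<le> x2" "x2 \<le> 3" "0 \<le> q1" "q1 \<le> 3" "0 \<le> q2" "q2 \<le> 3"
    using x q xq by (auto simp: Z4sq_def)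
  have "((x1 - q1) mod 4 = 0 \<and> (x2 - q2) mod 4 = 0) \<longleftrightarrow> (q1 = x1 \<and> q2 = x2)"
    using r by presburger
  then show ?thesis by (simp add: xq vsub_def vadd_def vneg_def md_def)
qed

lemma md_vsub_zero[simp]: "y \<in> Z4sq \<Longrightarrow> md (vsub y (0,0)) = y"
  by (simp add: vsub_def vneg_def md_id)

lemma transl_bij: "bij_betw (\<lambda>a. md (vadd a c)) Z4sq Z4sq"
proof (rule bij_betw_byWitness[where f' = "\<lambda>a. md (vadd a (vneg c))"])
  show "\<forall>a\<in>Z4sq. md (vadd (md (vadd a c)) (vneg c)) = a"
    by (auto simp: md_def vadd_def vneg_def Z4sq_def mod_add_left_eq mod_diff_left_eq)
  show "\<forall>a\<in>Z4sq. md (vadd (md (vadd a (vneg c))) c) = a"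
    by (auto simp: md_def vadd_def vneg_def Z4sq_def mod_add_left_eq mod_diff_left_eq)
qed auto

lemma sum_transl: "(\<Sum>a\<in>Z4sq. F (md (vadd a c))) = (\<Sum>a\<in>Z4sq. F a)"
  using sum.reindex_bij_betw[OF transl_bij, of F c] .

lemma sum_transl_left: "(\<Sum>r\<in>Z4sq. F r) = (\<Sum>q\<in>Z4sq. F (md (vadd a q)))"
  using sum_transl[of F a] by (simp add: vadd_comm)

lemma sum_Z4sq: "(\<Sum>q\<in>Z4sq. f q) = (\<Sum>a\<in>{0..3::int}. \<Sum>b\<in>{0..3::int}. f (a, b))"
  by (simp add: Z4sq_def sum.cartesian_product)

lemma sum_Z4sq2: "(\<Sum>q\<in>Z4sq \<times> Z4sq. f q) = (\<Sum>a\<in>Z4sq. \<Sum>b\<in>Z4sq. f (a, b))"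
  by (simp add: sum.cartesian_product)

lemma sum_Z4sq3: "(\<Sum>q\<in>Z4sq \<times> Z4sq \<times> Z4sq. f q) = (\<Sum>a\<in>Z4sq. \<Sum>b\<in>Z4sq. \<Sum>c\<in>Z4sq. f (a, b, c))"
  by (simp add: sum.cartesian_product)

lemma sum_Z4sq2_product: "(\<Sum>q\<in>Z4sq \<times> Z4sq. f (fst q) * g (snd q)) = (\<Sum>a\<in>Z4sq. f a) * (\<Sum>b\<in>Z4sq. g b :: complex)"
  unfolding sum_product sum_Z4sq2 by simp

lemma sum_ip_linear: "(\<Sum>q\<in>Z4sq. ip (c1 * fst q + c2 * snd q)) = (if c1 mod 4 = 0 \<and> c2 mod 4 = 0 then 16 else 0)"
proof -
  have "(\<Sum>q\<in>Z4sq. ip (c1 * fst q + c2 * snd q)) = (\<Sum>a\<in>{0..3::int}. \<Sum>b\<in>{0..3::int}. ip (c1 * a) * ip (c2 * b))"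
    by (simp add: sum_Z4sq ip_add)
  also have "\<dots> = (\<Sum>a\<in>{0..3::int}. ip (c1 * a)) * (\<Sum>b\<in>{0..3::int}. ip (c2 * b))"
    by (simp add: sum_product)
  finally show ?thesis by (simp add: sum_ip_mult)
qed

lemma dot_md_cong: "[dot a (md w) = dot a w] (mod 4)"
  unfolding dot_def md_def fst_conv snd_conv by (intro cong_add cong_mult cong_refl cong_mod_leftI)

lemma dot_zero[simp]: "dot a (0,0) = 0" by (simp add: dot_def)

section \<open>Monomials and the multiplication\<close>

lemma basis_iff: "x \<in> basis t \<longleftrightarrow> fst x \<in> Z4sq \<and> snd x \<subseteq> {0..<t}"
  by (cases x) (auto simp: basis_def Z4sq_def)

lemma basis_eq: "basis t = Z4sq \<times> Pow {0..<t}"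
  unfolding basis_def Z4sq_def by auto

lemma finite_basis[simp]: "finite (basis t)" by (simp add: basis_eq)

lemma mres_basis: "a \<in> basis t \<Longrightarrow> b \<in> basis t \<Longrightarrow> mres a b \<in> basis t"
  by (auto simp: basis_iff mres_def)

lemma oneI_basis[simp]: "oneI \<in> basis t" by (simp add: oneI_def basis_iff Z4sq_def)

lemma pure_basis[simp]: "a \<in> Z4sq \<Longrightarrow> (a, {}) \<in> basis t" by (simp add: basis_iff)

lemma mres_pair[simp]: "mres (v, S) (w, T) = (md (vadd v w), S \<union> T)"
  by (simp add: mres_def)

lemma mcoef_K_left[simp]: "mcoef d u (v, {}) b = 1"
  by (cases b) (simp add: mcoef_def)

lemma mcoef_K_right: "mcoef d u (v, S) (w, {}) = ip (- (\<Sum>k\<in>S. dot (d k) w))"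
proof (cases "finite S")
  case True
  then show ?thesis by (simp add: mcoef_def ip_prod sum_negf)
qed (simp add: mcoef_def)

lemma mcoef_overlap: "r \<inter> s \<noteq> {} \<Longrightarrow> mcoef d u (v, r) (w, s) = 0"
  by (simp add: mcoef_def)

lemma sum_single: "finite A \<Longrightarrow> a \<in> A \<Longrightarrow> (\<And>x. x \<in> A \<Longrightarrow> x \<noteq> a \<Longrightarrow> f x = 0) \<Longrightarrow> sum f A = f a"
  by (subst sum.remove[of A a]) (auto intro: sum.neutral)

lemma sum_indicator: "finite A \<Longrightarrow> a \<in> A \<Longrightarrow> (\<Sum>p\<in>A. (if p = a then 1 else 0) * F p) = (F a :: complex)"
proof -
  assume "finite A" "a \<in> A"
  have "(\<Sum>p\<in>A. (if p = a then 1 else 0) * F p) = (\<Sum>p\<in>A. if a = p then F p else 0)"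
    by (rule sum.cong) auto
  then show ?thesis using \<open>finite A\<close> \<open>a \<in> A\<close> by simp
qed

lemma sum_bvec: "finite A \<Longrightarrow> a \<in> A \<Longrightarrow> (\<Sum>p\<in>A. bvec a p * F p) = F a"
  using sum_indicator[of A a F] by (simp add: bvec_def)

lemma mc_eq: "mc d u a b x = mcoef d u a b * bvec (mres a b) x"
  by (simp add: mc_def bvec_def)

lemma carrier_repr: "h \<in> carrier t \<Longrightarrow> h = (\<lambda>x. \<Sum>b\<in>basis t. h b * bvec b x)"
proof
  fix x assume h: "h \<in> carrier t"
  show "h x = (\<Sum>b\<in>basis t. h b * bvec b x)"
  proof (cases "x \<in> basis t")
    case True
    then show ?thesis by (subst sum_single[of _ x]) (auto simp: bvec_def)
  next
    case False
    then have "h x = 0" using h unfolding carrier_def by blast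
    moreover have "(\<Sum>b\<in>basis t. h b * bvec b x) = 0"
      using False by (intro sum.neutral) (auto simp: bvec_def)
    ultimately show ?thesis by simp
  qed
qed

lemma mult_sum_left:
  assumes "finite I"
  shows "mult t d u (\<lambda>x. \<Sum>i\<in>I. c i * F i x) g = (\<lambda>x. \<Sum>i\<in>I. c i * mult t d u (F i) g x)"
proof
  fix x
  let ?B = "basis t"
  show "mult t d u (\<lambda>x. \<Sum>i\<in>I. c i * F i x) g x = (\<Sum>i\<in>I. c i * mult t d u (F i) g x)"
  proof (cases "x \<in> ?B")
    case True
    have "(\<Sum>b1\<in>?B. \<Sum>b2\<in>?B. (\<Sum>i\<in>I. c i * F i b1) * g b2 * mc d u b1 b2 x)
        = (\<Sum>b1\<in>?B. \<Sum>b2\<in>?B. \<Sum>i\<in>I. c i * (F i b1 * g b2 * mc d u b1 b2 x))"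
      by (simp add: sum_distrib_right mult.assoc)
    also have "\<dots> = (\<Sum>b1\<in>?B. \<Sum>i\<in>I. \<Sum>b2\<in>?B. c i * (F i b1 * g b2 * mc d u b1 b2 x))"
      by (rule sum.cong[OF refl], rule sum.swap)
    also have "\<dots> = (\<Sum>i\<in>I. \<Sum>b1\<in>?B. \<Sum>b2\<in>?B. c i * (F i b1 * g b2 * mc d u b1 b2 x))"
      by (rule sum.swap)
    finally show ?thesis using True by (simp add: Defs.mult_def sum_distrib_left)
  qed (simp add: Defs.mult_def)
qed

lemma mult_sum_right:
  assumes "finite I"
  shows "mult t d u f (\<lambda>x. \<Sum>i\<in>I. c i * G i x) = (\<lambda>x. \<Sum>i\<in>I. c i * mult t d u f (G i) x)"
proof
  fix x
  let ?B = "basis t"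
  show "mult t d u f (\<lambda>x. \<Sum>i\<in>I. c i * G i x) x = (\<Sum>i\<in>I. c i * mult t d u f (G i) x)"
  proof (cases "x \<in> ?B")
    case True
    have "(\<Sum>b1\<in>?B. \<Sum>b2\<in>?B. f b1 * (\<Sum>i\<in>I. c i * G i b2) * mc d u b1 b2 x)
        = (\<Sum>b1\<in>?B. \<Sum>b2\<in>?B. \<Sum>i\<in>I. c i * (f b1 * G i b2 * mc d u b1 b2 x))"
      by (rule sum.cong[OF refl], rule sum.cong[OF refl], simp add: sum_distrib_right sum_distrib_left mult_ac)
    also have "\<dots> = (\<Sum>b1\<in>?B. \<Sum>i\<in>I. \<Sum>b2\<in>?B. c i * (f b1 * G i b2 * mc d u b1 b2 x))"
      by (rule sum.cong[OF refl], rule sum.swap)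
    also have "\<dots> = (\<Sum>i\<in>I. \<Sum>b1\<in>?B. \<Sum>b2\<in>?B. c i * (f b1 * G i b2 * mc d u b1 b2 x))"
      by (rule sum.swap)
    finally show ?thesis using True by (simp add: Defs.mult_def sum_distrib_left)
  qed (simp add: Defs.mult_def)
qed

lemma mult_bvec:
  assumes a: "a \<in> basis t" and b: "b \<in> basis t"
  shows "mult t d u (bvec a) (bvec b) = (\<lambda>x. mcoef d u a b * bvec (mres a b) x)"
proof
  fix x
  show "mult t d u (bvec a) (bvec b) x = mcoef d u a b * bvec (mres a b) x"
  proof (cases "x \<in> basis t")
    case True
    have i: "(\<Sum>b2\<in>basis t. bvec b b2 * mc d u b1 b2 x) = mc d u b1 b x" for b1
      using sum_bvec[OF finite_basis b] by simp
    have "(\<Sum>b1\<in>basis t. \<Sum>b2\<in>basis t. bvec a b1 * bvec b b2 * mc d u b1 b2 x)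
       = (\<Sum>b1\<in>basis t. bvec a b1 * (\<Sum>b2\<in>basis t. bvec b b2 * mc d u b1 b2 x))"
      by (simp add: sum_distrib_left mult.assoc)
    also have "\<dots> = mc d u a b x" unfolding i using sum_bvec[OF finite_basis a] by simp
    finally have "(\<Sum>b1\<in>basis t. \<Sum>b2\<in>basis t. bvec a b1 * bvec b b2 * mc d u b1 b2 x) = mc d u a b x" .
    then show ?thesis using True by (simp add: Defs.mult_def mc_eq)
  next
    case False
    then have "bvec (mres a b) x = 0" using mres_basis[OF a b] by (auto simp: bvec_def)
    then show ?thesis using False by (simp add: Defs.mult_def)
  qed
qed

lemma mult_sparse:
  assumes I: "finite I" and J: "finite J" and a: "\<alpha> ` I \<subseteq> basis t" and c: "\<gamma> ` J \<subseteq> basis t"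
  shows "mult t d u (\<lambda>x. \<Sum>i\<in>I. f i * bvec (\<alpha> i) x) (\<lambda>x. \<Sum>j\<in>J. g j * bvec (\<gamma> j) x)
     = (\<lambda>x. \<Sum>i\<in>I. \<Sum>j\<in>J. f i * g j * mcoef d u (\<alpha> i) (\<gamma> j) * bvec (mres (\<alpha> i) (\<gamma> j)) x)"
proof -
  have e: "mult t d u (bvec (\<alpha> i)) (bvec (\<gamma> j)) x = mcoef d u (\<alpha> i) (\<gamma> j) * bvec (mres (\<alpha> i) (\<gamma> j)) x"
    if "i \<in> I" "j \<in> J" for i j x using a c that by (simp add: mult_bvec image_subset_iff)
  show ?thesis
    unfolding mult_sum_left[OF I] mult_sum_right[OF J]
    by (rule ext, rule sum.cong[OF refl], simp add: sum_distrib_left e mult_ac)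
qed

lemma Xgen_sparse: "Xgen k = (\<lambda>x. \<Sum>j\<in>{()}. 1 * bvec ((0,0),{k}) x)"
  by (simp add: Xgen_def)

lemma mres_oneI_left: "b \<in> basis t \<Longrightarrow> mres oneI b = b"
  by (cases b) (auto simp: oneI_def basis_iff md_id)

lemma mres_oneI_right: "b \<in> basis t \<Longrightarrow> mres b oneI = b"
  by (cases b) (auto simp: oneI_def basis_iff md_id)

lemma mcoef_oneI_left: "mcoef d u oneI b = 1"
  by (simp add: oneI_def)

lemma mcoef_oneI_right: "mcoef d u b oneI = 1"
  by (cases b) (simp add: oneI_def mcoef_K_right)

lemma bvec_sparse: "bvec b = (\<lambda>x. \<Sum>j\<in>{()}. 1 * bvec b x)"
  by simp

lemma mult_carrier_left:
  assumes "h \<in> carrier t"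
  shows "mult t d u h g = (\<lambda>x. \<Sum>b\<in>basis t. h b * mult t d u (bvec b) g x)"
  by (subst carrier_repr[OF assms], rule mult_sum_left[OF finite_basis])

lemma mult_carrier_right:
  assumes "h \<in> carrier t"
  shows "mult t d u g h = (\<lambda>x. \<Sum>b\<in>basis t. h b * mult t d u g (bvec b) x)"
  by (subst carrier_repr[OF assms], rule mult_sum_right[OF finite_basis])

lemma mult_one_bvec: "b \<in> basis t \<Longrightarrow> mult t d u one (bvec b) = bvec b"
  using mult_bvec[OF oneI_basis] by (simp add: one_def mcoef_oneI_left mres_oneI_left)

lemma mult_bvec_one: "b \<in> basis t \<Longrightarrow> mult t d u (bvec b) one = bvec b"
  using mult_bvec[OF _ oneI_basis] by (simp add: one_def mcoef_oneI_right mres_oneI_right)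

lemma mult_one_left: "h \<in> carrier t \<Longrightarrow> mult t d u one h = h"
  using carrier_repr[of h t] by (simp add: mult_carrier_right mult_one_bvec)

lemma mult_one_right: "h \<in> carrier t \<Longrightarrow> mult t d u h one = h"
  using carrier_repr[of h t] by (simp add: mult_carrier_left mult_bvec_one)

lemma one_in_carrier: "one \<in> carrier t"
  by (auto simp: carrier_def one_def bvec_def)

lemma Kpow_in_carrier: "Kpow v \<in> carrier t"
  by (auto simp: carrier_def Kpow_def bvec_def basis_iff)

lemma Kpow_at: "w \<in> Z4sq \<Longrightarrow> Kpow w x = (if x = (w, {}) then 1 else 0)"
  by (simp add: Kpow_def bvec_def md_id)

lemma Kpow_zero: "Kpow (0, 0) = one" by (simp add: Kpow_def one_def oneI_def md_def)

lemma mult_Kpow: "mult t d u (Kpow a) (Kpow b) = Kpow (vadd a b)"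
proof -
  have "mult t d u (Kpow a) (Kpow b) = (\<lambda>x. mcoef d u (md a, {}) (md b, {}) * bvec (mres (md a, {}) (md b, {})) x)"
    unfolding Kpow_def by (rule mult_bvec) auto
  then show ?thesis by (simp add: Kpow_def)
qed

lemma Sb_K: "Sb t d u (q, {}) = Kpow (- fst q, - snd q)"
  unfolding Sb_def by (simp add: mult_one_left Kpow_in_carrier)

lemma antipode_Kpow: "antipode t d u (Kpow a) = Sb t d u (md a, {})"
proof
  fix x
  have b: "(md a, {}) \<in> basis t" by simp
  show "antipode t d u (Kpow a) x = Sb t d u (md a, {}) x"
    unfolding antipode_def Kpow_def by (subst sum_bvec[OF finite_basis b]) simp
qed

lemma counit_one: "counit t one = 1"
  unfolding counit_def one_def by (subst sum_bvec[OF finite_basis oneI_basis]) (simp add: oneI_def)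

lemma one_at: "one (y, {}) = (if y = (0,0) then 1 else 0)"
  by (simp add: one_def bvec_def oneI_def)

lemma one_nonzero_imp: "one y \<noteq> 0 \<Longrightarrow> y = ((0,0), {})"
  by (simp add: one_def bvec_def oneI_def split: if_splits)

section \<open>Tensor squares and cubes\<close>

definition bvec2 :: "idx \<times> idx \<Rightarrow> elt2" where "bvec2 q = (\<lambda>p. if p = q then 1 else 0)"

definition bvec3 :: "idx \<times> idx \<times> idx \<Rightarrow> elt3" where "bvec3 q = (\<lambda>p. if p = q then 1 else 0)"

definition mres2 :: "idx \<times> idx \<Rightarrow> idx \<times> idx \<Rightarrow> idx \<times> idx" where
  "mres2 q q' = (mres (fst q) (fst q'), mres (snd q) (snd q'))"

definition mcoef2 :: "vecs \<Rightarrow> vecs \<Rightarrow> idx \<times> idx \<Rightarrow> idx \<times> idx \<Rightarrow> complex" where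
  "mcoef2 d u q q' = mcoef d u (fst q) (fst q') * mcoef d u (snd q) (snd q')"

definition mres3 :: "idx \<times> idx \<times> idx \<Rightarrow> idx \<times> idx \<times> idx \<Rightarrow> idx \<times> idx \<times> idx" where
  "mres3 q q' = (mres (fst q) (fst q'), mres (fst (snd q)) (fst (snd q')),
   mres (snd (snd q)) (snd (snd q')))"

definition mcoef3 :: "vecs \<Rightarrow> vecs \<Rightarrow> idx \<times> idx \<times> idx \<Rightarrow> idx \<times> idx \<times> idx \<Rightarrow> complex" where
  "mcoef3 d u q q' = mcoef d u (fst q) (fst q') * mcoef d u (fst (snd q)) (fst (snd q'))
   * mcoef d u (snd (snd q)) (snd (snd q'))"

lemma sum_bvec2: "finite A \<Longrightarrow> a \<in> A \<Longrightarrow> (\<Sum>p\<in>A. bvec2 a p * F p) = F a"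
  using sum_indicator[of A a F] by (simp add: bvec2_def)

lemma sum_bvec3: "finite A \<Longrightarrow> a \<in> A \<Longrightarrow> (\<Sum>p\<in>A. bvec3 a p * F p) = F a"
  using sum_indicator[of A a F] by (simp add: bvec3_def)

lemma tens_bvec: "tens (bvec a) (bvec b) = bvec2 (a, b)"
  by (auto simp: tens_def bvec_def bvec2_def)

lemma mres2_basis: "a \<in> basis t \<times> basis t \<Longrightarrow> b \<in> basis t \<times> basis t \<Longrightarrow> mres2 a b \<in> basis t \<times> basis t"
  by (auto simp: mres2_def mres_basis simp del: mres_pair)

lemma mres3_basis: "a \<in> basis t \<times> basis t \<times> basis t \<Longrightarrow> b \<in> basis t \<times> basis t \<times> basis t
   \<Longrightarrow> mres3 a b \<in> basis t \<times> basis t \<times> basis t"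
  by (auto simp: mres3_def mres_basis simp del: mres_pair)

lemma mult2_sum_left:
  assumes "finite I"
  shows "mult2 t d u (\<lambda>x. \<Sum>i\<in>I. c i * F i x) G = (\<lambda>x. \<Sum>i\<in>I. c i * mult2 t d u (F i) G x)"
proof
  fix pp :: "idx \<times> idx"
  obtain x y where pp: "pp = (x, y)" by (cases pp)
  let ?B = "basis t \<times> basis t"
  let ?m = "\<lambda>p q. mc d u (fst p) (fst q) x * mc d u (snd p) (snd q) y"
  have "(\<Sum>p\<in>?B. \<Sum>q\<in>?B. (\<Sum>i\<in>I. c i * F i p) * G q * ?m p q)
      = (\<Sum>p\<in>?B. \<Sum>q\<in>?B. \<Sum>i\<in>I. c i * (F i p * G q * ?m p q))" (is "?L = _")
    by (rule sum.cong[OF refl], rule sum.cong[OF refl], simp add: sum_distrib_right sum_distrib_left mult_ac)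
  also have "\<dots> = (\<Sum>p\<in>?B. \<Sum>i\<in>I. \<Sum>q\<in>?B. c i * (F i p * G q * ?m p q))"
    by (rule sum.cong[OF refl], rule sum.swap)
  also have "\<dots> = (\<Sum>i\<in>I. \<Sum>p\<in>?B. \<Sum>q\<in>?B. c i * (F i p * G q * ?m p q))" (is "_ = ?R")
    by (rule sum.swap)
  finally have ch: "?L = ?R" .
  show "mult2 t d u (\<lambda>x. \<Sum>i\<in>I. c i * F i x) G pp = (\<Sum>i\<in>I. c i * mult2 t d u (F i) G pp)"
  proof (cases "x \<in> basis t \<and> y \<in> basis t")
    case True
    then show ?thesis unfolding pp using ch by (simp add: mult2_def sum_distrib_left mult_ac)
  qed (auto simp: mult2_def pp)
qed

lemma mult2_sum_right:
  assumes "finite I"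
  shows "mult2 t d u F (\<lambda>x. \<Sum>i\<in>I. c i * G i x) = (\<lambda>x. \<Sum>i\<in>I. c i * mult2 t d u F (G i) x)"
proof
  fix pp :: "idx \<times> idx"
  obtain x y where pp: "pp = (x, y)" by (cases pp)
  let ?B = "basis t \<times> basis t"
  let ?m = "\<lambda>p q. mc d u (fst p) (fst q) x * mc d u (snd p) (snd q) y"
  have "(\<Sum>p\<in>?B. \<Sum>q\<in>?B. F p * (\<Sum>i\<in>I. c i * G i q) * ?m p q)
      = (\<Sum>p\<in>?B. \<Sum>q\<in>?B. \<Sum>i\<in>I. c i * (F p * G i q * ?m p q))" (is "?L = _")
    by (rule sum.cong[OF refl], rule sum.cong[OF refl], simp add: sum_distrib_right sum_distrib_left mult_ac)
  also have "\<dots> = (\<Sum>p\<in>?B. \<Sum>i\<in>I. \<Sum>q\<in>?B. c i * (F p * G i q * ?m p q))"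
    by (rule sum.cong[OF refl], rule sum.swap)
  also have "\<dots> = (\<Sum>i\<in>I. \<Sum>p\<in>?B. \<Sum>q\<in>?B. c i * (F p * G i q * ?m p q))" (is "_ = ?R")
    by (rule sum.swap)
  finally have ch: "?L = ?R" .
  show "mult2 t d u F (\<lambda>x. \<Sum>i\<in>I. c i * G i x) pp = (\<Sum>i\<in>I. c i * mult2 t d u F (G i) pp)"
  proof (cases "x \<in> basis t \<and> y \<in> basis t")
    case True
    then show ?thesis unfolding pp using ch by (simp add: mult2_def sum_distrib_left mult_ac)
  qed (auto simp: mult2_def pp)
qed

lemma mult2_bvec2:
  assumes a: "a \<in> basis t \<times> basis t" and b: "b \<in> basis t \<times> basis t"
  shows "mult2 t d u (bvec2 a) (bvec2 b) = (\<lambda>p. mcoef2 d u a b * bvec2 (mres2 a b) p)"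
proof
  fix pp :: "idx \<times> idx"
  obtain x y where pp: "pp = (x, y)" by (cases pp)
  let ?B = "basis t \<times> basis t"
  let ?m = "\<lambda>p q. mc d u (fst p) (fst q) x * mc d u (snd p) (snd q) y"
  have i: "(\<Sum>q\<in>?B. bvec2 b q * ?m p q) = ?m p b" for p
    using sum_bvec2[OF _ b] by simp
  have "(\<Sum>p\<in>?B. \<Sum>q\<in>?B. bvec2 a p * bvec2 b q * ?m p q) = (\<Sum>p\<in>?B. bvec2 a p * (\<Sum>q\<in>?B. bvec2 b q * ?m p q))"
    by (simp add: sum_distrib_left mult.assoc)
  also have "\<dots> = ?m a b" unfolding i using sum_bvec2[OF _ a] by simp
  finally have e: "(\<Sum>p\<in>?B. \<Sum>q\<in>?B. bvec2 a p * bvec2 b q * ?m p q) = ?m a b" .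
  show "mult2 t d u (bvec2 a) (bvec2 b) pp = mcoef2 d u a b * bvec2 (mres2 a b) pp"
  proof (cases "x \<in> basis t \<and> y \<in> basis t")
    case True
    have "mult2 t d u (bvec2 a) (bvec2 b) pp = (\<Sum>p\<in>?B. \<Sum>q\<in>?B. bvec2 a p * bvec2 b q * ?m p q)"
      using True unfolding pp by (simp add: mult2_def mult.assoc)
    also have "\<dots> = ?m a b" by (rule e)
    also have "\<dots> = mcoef2 d u a b * bvec2 (mres2 a b) pp"
      unfolding pp by (simp add: mc_eq mcoef2_def mres2_def bvec2_def bvec_def)
    finally show ?thesis .
  next
    case False
    then have "bvec2 (mres2 a b) pp = 0" using mres2_basis[OF a b] by (auto simp: bvec2_def pp)
    then show ?thesis using False by (auto simp: mult2_def pp)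
  qed
qed

lemma mult2_sparse:
  assumes I: "finite I" and J: "finite J" and a: "\<alpha> ` I \<subseteq> basis t \<times> basis t"
    and c: "\<gamma> ` J \<subseteq> basis t \<times> basis t"
  shows "mult2 t d u (\<lambda>x. \<Sum>i\<in>I. f i * bvec2 (\<alpha> i) x) (\<lambda>x. \<Sum>j\<in>J. g j * bvec2 (\<gamma> j) x)
     = (\<lambda>x. \<Sum>i\<in>I. \<Sum>j\<in>J. f i * g j * mcoef2 d u (\<alpha> i) (\<gamma> j) * bvec2 (mres2 (\<alpha> i) (\<gamma> j)) x)"
proof -
  have e: "mult2 t d u (bvec2 (\<alpha> i)) (bvec2 (\<gamma> j)) x = mcoef2 d u (\<alpha> i) (\<gamma> j) * bvec2 (mres2 (\<alpha> i) (\<gamma> j)) x"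
    if "i \<in> I" "j \<in> J" for i j x using a c that by (simp add: mult2_bvec2 image_subset_iff)
  show ?thesis
    unfolding mult2_sum_left[OF I] mult2_sum_right[OF J]
    by (rule ext, rule sum.cong[OF refl], simp add: sum_distrib_left e mult_ac)
qed

lemma mult3_sum_left:
  assumes "finite I"
  shows "mult3 t d u (\<lambda>x. \<Sum>i\<in>I. c i * F i x) G = (\<lambda>x. \<Sum>i\<in>I. c i * mult3 t d u (F i) G x)"
proof
  fix pp :: "idx \<times> idx \<times> idx"
  obtain x y z where pp: "pp = (x, y, z)" by (cases pp)
  let ?B = "basis t \<times> basis t \<times> basis t"
  let ?m = "\<lambda>p q. mc d u (fst p) (fst q) x * mc d u (fst (snd p)) (fst (snd q)) y
          * mc d u (snd (snd p)) (snd (snd q)) z"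
  have "(\<Sum>p\<in>?B. \<Sum>q\<in>?B. (\<Sum>i\<in>I. c i * F i p) * G q * ?m p q)
      = (\<Sum>p\<in>?B. \<Sum>q\<in>?B. \<Sum>i\<in>I. c i * (F i p * G q * ?m p q))" (is "?L = _")
    by (rule sum.cong[OF refl], rule sum.cong[OF refl], simp add: sum_distrib_right sum_distrib_left mult_ac)
  also have "\<dots> = (\<Sum>p\<in>?B. \<Sum>i\<in>I. \<Sum>q\<in>?B. c i * (F i p * G q * ?m p q))"
    by (rule sum.cong[OF refl], rule sum.swap)
  also have "\<dots> = (\<Sum>i\<in>I. \<Sum>p\<in>?B. \<Sum>q\<in>?B. c i * (F i p * G q * ?m p q))" (is "_ = ?R")
    by (rule sum.swap)
  finally have ch: "?L = ?R" .
  show "mult3 t d u (\<lambda>x. \<Sum>i\<in>I. c i * F i x) G pp = (\<Sum>i\<in>I. c i * mult3 t d u (F i) G pp)"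
  proof (cases "x \<in> basis t \<and> y \<in> basis t \<and> z \<in> basis t")
    case True
    then show ?thesis unfolding pp using ch by (simp add: mult3_def sum_distrib_left mult_ac)
  qed (auto simp: mult3_def pp)
qed

lemma mult3_sum_right:
  assumes "finite I"
  shows "mult3 t d u F (\<lambda>x. \<Sum>i\<in>I. c i * G i x) = (\<lambda>x. \<Sum>i\<in>I. c i * mult3 t d u F (G i) x)"
proof
  fix pp :: "idx \<times> idx \<times> idx"
  obtain x y z where pp: "pp = (x, y, z)" by (cases pp)
  let ?B = "basis t \<times> basis t \<times> basis t"
  let ?m = "\<lambda>p q. mc d u (fst p) (fst q) x * mc d u (fst (snd p)) (fst (snd q)) y
          * mc d u (snd (snd p)) (snd (snd q)) z"
  have "(\<Sum>p\<in>?B. \<Sum>q\<in>?B. F p * (\<Sum>i\<in>I. c i * G i q) * ?m p q)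
      = (\<Sum>p\<in>?B. \<Sum>q\<in>?B. \<Sum>i\<in>I. c i * (F p * G i q * ?m p q))" (is "?L = _")
    by (rule sum.cong[OF refl], rule sum.cong[OF refl], simp add: sum_distrib_right sum_distrib_left mult_ac)
  also have "\<dots> = (\<Sum>p\<in>?B. \<Sum>i\<in>I. \<Sum>q\<in>?B. c i * (F p * G i q * ?m p q))"
    by (rule sum.cong[OF refl], rule sum.swap)
  also have "\<dots> = (\<Sum>i\<in>I. \<Sum>p\<in>?B. \<Sum>q\<in>?B. c i * (F p * G i q * ?m p q))" (is "_ = ?R")
    by (rule sum.swap)
  finally have ch: "?L = ?R" .
  show "mult3 t d u F (\<lambda>x. \<Sum>i\<in>I. c i * G i x) pp = (\<Sum>i\<in>I. c i * mult3 t d u F (G i) pp)"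
  proof (cases "x \<in> basis t \<and> y \<in> basis t \<and> z \<in> basis t")
    case True
    then show ?thesis unfolding pp using ch by (simp add: mult3_def sum_distrib_left mult_ac)
  qed (auto simp: mult3_def pp)
qed

lemma mult3_bvec3:
  assumes a: "a \<in> basis t \<times> basis t \<times> basis t" and b: "b \<in> basis t \<times> basis t \<times> basis t"
  shows "mult3 t d u (bvec3 a) (bvec3 b) = (\<lambda>p. mcoef3 d u a b * bvec3 (mres3 a b) p)"
proof
  fix pp :: "idx \<times> idx \<times> idx"
  obtain x y z where pp: "pp = (x, y, z)" by (cases pp)
  let ?B = "basis t \<times> basis t \<times> basis t"
  let ?m = "\<lambda>p q. mc d u (fst p) (fst q) x * mc d u (fst (snd p)) (fst (snd q)) y
          * mc d u (snd (snd p)) (snd (snd q)) z"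
  have i: "(\<Sum>q\<in>?B. bvec3 b q * ?m p q) = ?m p b" for p
    using sum_bvec3[OF _ b] by simp
  have "(\<Sum>p\<in>?B. \<Sum>q\<in>?B. bvec3 a p * bvec3 b q * ?m p q) = (\<Sum>p\<in>?B. bvec3 a p * (\<Sum>q\<in>?B. bvec3 b q * ?m p q))"
    by (simp add: sum_distrib_left mult.assoc)
  also have "\<dots> = ?m a b" unfolding i using sum_bvec3[OF _ a] by simp
  finally have e: "(\<Sum>p\<in>?B. \<Sum>q\<in>?B. bvec3 a p * bvec3 b q * ?m p q) = ?m a b" .
  show "mult3 t d u (bvec3 a) (bvec3 b) pp = mcoef3 d u a b * bvec3 (mres3 a b) pp"
  proof (cases "x \<in> basis t \<and> y \<in> basis t \<and> z \<in> basis t")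
    case True
    have "mult3 t d u (bvec3 a) (bvec3 b) pp = (\<Sum>p\<in>?B. \<Sum>q\<in>?B. bvec3 a p * bvec3 b q * ?m p q)"
      using True unfolding pp by (simp add: mult3_def mult.assoc)
    also have "\<dots> = ?m a b" by (rule e)
    also have "\<dots> = mcoef3 d u a b * bvec3 (mres3 a b) pp"
      unfolding pp by (simp add: mc_eq mcoef3_def mres3_def bvec3_def bvec_def)
    finally show ?thesis .
  next
    case False
    then have "bvec3 (mres3 a b) pp = 0" using mres3_basis[OF a b] by (auto simp: bvec3_def pp)
    then show ?thesis using False by (auto simp: mult3_def pp)
  qed
qed

lemma mult3_sparse:
  assumes I: "finite I" and J: "finite J" and a: "\<alpha> ` I \<subseteq> basis t \<times> basis t \<times> basis t"
    and c: "\<gamma> ` J \<subseteq> basis t \<times> basis t \<times> basis t"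
  shows "mult3 t d u (\<lambda>x. \<Sum>i\<in>I. f i * bvec3 (\<alpha> i) x) (\<lambda>x. \<Sum>j\<in>J. g j * bvec3 (\<gamma> j) x)
     = (\<lambda>x. \<Sum>i\<in>I. \<Sum>j\<in>J. f i * g j * mcoef3 d u (\<alpha> i) (\<gamma> j) * bvec3 (mres3 (\<alpha> i) (\<gamma> j)) x)"
proof -
  have e: "mult3 t d u (bvec3 (\<alpha> i)) (bvec3 (\<gamma> j)) x = mcoef3 d u (\<alpha> i) (\<gamma> j) * bvec3 (mres3 (\<alpha> i) (\<gamma> j)) x"
    if "i \<in> I" "j \<in> J" for i j x using a c that by (simp add: mult3_bvec3 image_subset_iff)
  show ?thesis
    unfolding mult3_sum_left[OF I] mult3_sum_right[OF J]
    by (rule ext, rule sum.cong[OF refl], simp add: sum_distrib_left e mult_ac)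
qed

lemma flip_sparse: "flip (\<lambda>p. \<Sum>i\<in>I. f i * bvec2 (\<alpha> i) p) = (\<lambda>p. \<Sum>i\<in>I. f i * bvec2 (prod.swap (\<alpha> i)) p)"
proof
  fix p :: "idx \<times> idx"
  obtain x y where p: "p = (x, y)" by (cases p)
  have "bvec2 (\<alpha> i) (y, x) = bvec2 (prod.swap (\<alpha> i)) (x, y)" for i
    by (cases "\<alpha> i") (auto simp: bvec2_def)
  then show "flip (\<lambda>p. \<Sum>i\<in>I. f i * bvec2 (\<alpha> i) p) p = (\<Sum>i\<in>I. f i * bvec2 (prod.swap (\<alpha> i)) p)"
    by (simp add: flip_def p)
qed

lemma flip_in_carrier2: "F \<in> carrier2 t \<Longrightarrow> flip F \<in> carrier2 t"
  by (auto simp: carrier2_def flip_def)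

lemma one2_bvec2: "one2 = bvec2 (oneI, oneI)"
  by (simp add: one2_def one_def tens_bvec)

lemma one2_in_carrier2: "one2 \<in> carrier2 t"
  by (auto simp: one2_bvec2 carrier2_def bvec2_def)

lemma mult2_one2: "mult2 t d u one2 one2 = one2"
proof -
  have o: "(oneI, oneI) \<in> basis t \<times> basis t" by simp
  show ?thesis unfolding one2_bvec2 mult2_bvec2[OF o o]
    by (simp add: mcoef2_def mres2_def mcoef_oneI_left mres_oneI_left)
qed

section \<open>The coproduct of a monomial\<close>

definition usum :: "vecs \<Rightarrow> nat set \<Rightarrow> int \<times> int" where
  "usum u S = (\<Sum>k\<in>S. fst (u k), \<Sum>k\<in>S. snd (u k))"

definition reorder_exp :: "vecs \<Rightarrow> vecs \<Rightarrow> nat set \<Rightarrow> nat set \<Rightarrow> int" where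
  "reorder_exp d u P S = (\<Sum>k\<in>P - S. \<Sum>j\<in>S. (if k < j then dot (d k) (u j) else 0))"

(* Delta(K^v X^P) in closed form: choosing X_j (x) K^(u_j) from Delta(X_j) for j in S and 1 (x) X_k
   for k in P - S, the second leg is normal-ordered by moving each K^(u_j) left past the X_k with
   k < j, which costs i^(-d_k.u_j). *)
definition Delta_mono :: "vecs \<Rightarrow> vecs \<Rightarrow> int \<times> int \<Rightarrow> nat set \<Rightarrow> elt2" where
  "Delta_mono d u v P = (\<lambda>p. \<Sum>S\<in>Pow P. ip (- reorder_exp d u P S) * bvec2 ((md v, S), (md (vadd v (usum u S)), P - S)) p)"

lemma inj_on_insert_Pow: "k \<notin> P \<Longrightarrow> inj_on (insert k) (Pow P)"
  by (auto simp: inj_on_def)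

lemma sum_Pow_insert:
  assumes "finite P" "k \<notin> P"
  shows "(\<Sum>S\<in>Pow (insert k P). f S) = (\<Sum>S\<in>Pow P. f S) + (\<Sum>S\<in>Pow P. f (insert k S))"
proof -
  have "(\<Sum>S\<in>Pow (insert k P). f S) = (\<Sum>S\<in>Pow P \<union> insert k ` Pow P. f S)"
    by (simp add: Pow_insert)
  also have "\<dots> = (\<Sum>S\<in>Pow P. f S) + (\<Sum>S\<in>insert k ` Pow P. f S)"
    by (rule sum.union_disjoint) (use assms in auto)
  also have "(\<Sum>S\<in>insert k ` Pow P. f S) = (\<Sum>S\<in>Pow P. f (insert k S))"
    by (rule sum.reindex[OF inj_on_insert_Pow[OF assms(2)], unfolded comp_def])
  finally show ?thesis .
qed

lemma DeltaX_sparse: "DeltaX u k = (\<lambda>p. \<Sum>i\<in>{False, True}. 1 *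
   bvec2 (if i then (((0,0),{k}), (md (u k), {})) else (oneI, ((0,0),{k}))) p)"
  by (auto simp: DeltaX_def tens_bvec one_def Xgen_def Kpow_def bvec2_def)

lemma mcoef_Xgen_greatest: "\<forall>j\<in>Q. j < k \<Longrightarrow> mcoef d u (w, Q) ((0,0), {k}) = 1"
proof -
  assume lt: "\<forall>j\<in>Q. j < k"
  then have "{j \<in> {k}. j < l} = {}" if "l \<in> Q" for l using that by auto
  then have "(\<Prod>l\<in>Q. \<Prod>j\<in>{j \<in> {k}. j < l}. ip (dot (d j) (u l))) = 1"
    by (intro prod.neutral ballI) auto
  then show ?thesis using lt by (auto simp: mcoef_def)
qed

lemma reorder_exp_insert_greatest:
  assumes "finite P" "S \<subseteq> P" "\<forall>j\<in>P. j < k"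
  shows "reorder_exp d u (insert k P) S = reorder_exp d u P S"
proof -
  have "insert k P - S = insert k (P - S)" "k \<notin> P - S" using assms by auto
  moreover have "(\<Sum>j\<in>S. (if k < j then dot (d k) (u j) else 0)) = 0"
    using assms by (intro sum.neutral) (auto dest: less_asym)
  ultimately show ?thesis unfolding reorder_exp_def using assms(1) by simp
qed

lemma reorder_exp_insert_insert_greatest:
  assumes "finite P" "S \<subseteq> P" "\<forall>j\<in>P. j < k"
  shows "reorder_exp d u (insert k P) (insert k S) = reorder_exp d u P S + (\<Sum>j\<in>P - S. dot (d j) (u k))"
proof -
  have kS: "k \<notin> S" and fS: "finite S" using assms finite_subset by auto
  have "insert k P - insert k S = P - S" using assms by auto
  moreover have "(\<Sum>m\<in>insert k S. (if j < m then dot (d j) (u m) else 0))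
       = dot (d j) (u k) + (\<Sum>m\<in>S. (if j < m then dot (d j) (u m) else 0))" if "j \<in> P - S" for j
    using that assms kS fS by simp
  ultimately show ?thesis unfolding reorder_exp_def by (simp add: sum.distrib)
qed

lemma Delta_mono_insert:
  assumes fin: "finite P" and Pt: "P \<subseteq> {0..<t}" and kt: "k < t" and lt: "\<forall>j\<in>P. j < k"
  shows "mult2 t d u (Delta_mono d u v P) (DeltaX u k) = Delta_mono d u v (insert k P)"
proof -
  have kP: "k \<notin> P" using lt by auto
  let ?pos = "\<lambda>S. ((md v, S), (md (vadd v (usum u S)), P - S))"
  let ?dx = "\<lambda>i. if i then (((0::int,0::int),{k}), (md (u k), {})) else (oneI, ((0,0),{k}))"
  let ?X = "\<lambda>S i p. ip (- reorder_exp d u P S) * 1 * mcoef2 d u (?pos S) (?dx i) * bvec2 (mres2 (?pos S) (?dx i)) p"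
  let ?T = "\<lambda>S p. ip (- reorder_exp d u (insert k P) S) * bvec2 ((md v, S), (md (vadd v (usum u S)), insert k P - S)) p"
  have b1: "?pos ` Pow P \<subseteq> basis t \<times> basis t" using Pt by (auto simp: basis_iff)
  have b2: "?dx ` {False, True} \<subseteq> basis t \<times> basis t"
    using kt md_in_Z4sq[of "u k"] by (auto simp: basis_iff Z4sq_def oneI_def)
  have X_False: "?X S False p = ?T S p" if S: "S \<subseteq> P" for S p
  proof -
    have "mres2 (?pos S) (?dx False) = ((md v, S), (md (vadd v (usum u S)), insert k P - S))"
      using S kP by (auto simp: mres2_def oneI_def)
    moreover have "mcoef d u (md (vadd v (usum u S)), P - S) ((0,0), {k}) = 1"
      using lt by (intro mcoef_Xgen_greatest) auto
    ultimately show ?thesis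
      using reorder_exp_insert_greatest[OF fin S lt] by (simp add: mcoef2_def oneI_def mcoef_def)
  qed
  have X_True: "?X S True p = ?T (insert k S) p" if S: "S \<subseteq> P" for S p
  proof -
    have fS: "finite S" and kS: "k \<notin> S" using S fin kP finite_subset by auto
    have "usum u (insert k S) = vadd (usum u S) (u k)"
      using kS fS by (simp add: usum_def vadd_def)
    then have "mres2 (?pos S) (?dx True)
        = ((md v, insert k S), (md (vadd v (usum u (insert k S))), insert k P - insert k S))"
      using S kP by (auto simp: mres2_def vadd_assoc)
    moreover have "mcoef d u (md v, S) ((0,0), {k}) = 1"
      using S lt by (intro mcoef_Xgen_greatest) auto
    moreover have "mcoef d u (md (vadd v (usum u S)), P - S) (md (u k), {})
        = ip (- (\<Sum>j\<in>P - S. dot (d j) (u k)))"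
      unfolding mcoef_K_right by (rule ip_cong, rule cong_uminus, rule cong_sum, rule dot_md_cong)
    ultimately show ?thesis
      using reorder_exp_insert_insert_greatest[OF fin S lt] by (simp add: mcoef2_def ip_add)
  qed
  have "mult2 t d u (Delta_mono d u v P) (DeltaX u k) = (\<lambda>p. \<Sum>S\<in>Pow P. \<Sum>i\<in>{False, True}. ?X S i p)"
    unfolding Delta_mono_def DeltaX_sparse
    by (rule mult2_sparse[OF _ _ b1 b2]) (auto simp: fin)
  also have "\<dots> = (\<lambda>p. \<Sum>S\<in>Pow P. ?T S p + ?T (insert k S) p)"
    using X_False X_True by (intro ext sum.cong) auto
  also have "\<dots> = Delta_mono d u v (insert k P)"
    unfolding Delta_mono_def sum_Pow_insert[OF fin kP] by (simp add: sum.distrib)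
  finally show ?thesis .
qed

lemma foldl_Delta_mono:
  assumes "sorted xs" "distinct xs" "set xs \<subseteq> {0..<t}"
  shows "foldl (\<lambda>acc k. mult2 t d u acc (DeltaX u k)) (Delta_mono d u v {}) xs = Delta_mono d u v (set xs)"
  using assms
proof (induction xs rule: rev_induct)
  case Nil
  then show ?case by simp
next
  case (snoc k xs)
  have "\<forall>j\<in>set xs. j \<le> k" "k \<notin> set xs" using snoc.prems by (auto simp: sorted_append)
  then have "\<forall>j\<in>set xs. j < k" using le_neq_implies_less by blast
  then show ?case using snoc by (simp add: sorted_append Delta_mono_insert)
qed

lemma Delta_mono_empty: "Delta_mono d u v {} = tens (Kpow v) (Kpow v)"
  by (simp add: Delta_mono_def usum_def reorder_exp_def tens_bvec Kpow_def)

lemma Deltab_eq_Delta_mono: "b \<in> basis t \<Longrightarrow> Deltab t d u b = Delta_mono d u (fst b) (snd b)"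
proof -
  assume b: "b \<in> basis t"
  then have "snd b \<subseteq> {0..<t}" by (simp add: basis_iff)
  moreover then have "finite (snd b)" using finite_subset by blast
  ultimately show ?thesis
    unfolding Deltab_def Delta_mono_empty[of d u "fst b", symmetric]
    by (subst foldl_Delta_mono) auto
qed

lemma Delta_expand: "Delta t d u h p = (\<Sum>b\<in>basis t. h b * Delta_mono d u (fst b) (snd b) p)"
  unfolding Delta_def by (rule sum.cong) (auto simp: Deltab_eq_Delta_mono)

lemma Deltab_K: "a \<in> Z4sq \<Longrightarrow> Deltab t d u (a, {}) = bvec2 ((a, {}), (a, {}))"
proof -
  assume a: "a \<in> Z4sq"
  then have "(a, {}) \<in> basis t" by simp
  then show ?thesis by (simp add: Deltab_eq_Delta_mono Delta_mono_empty tens_bvec Kpow_def md_id[OF a])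
qed

lemma Delta_one: "Delta t d u one = one2"
proof
  fix p
  have "Delta t d u one p = Deltab t d u oneI p"
    unfolding Delta_def one_def by (subst sum_bvec[OF finite_basis oneI_basis]) simp
  also have "\<dots> = one2 p"
    by (simp add: Deltab_eq_Delta_mono Delta_mono_empty oneI_def Kpow_zero one2_def)
  finally show "Delta t d u one p = one2 p" .
qed

section \<open>Integrals and cointegrals\<close>

definition topI :: "nat \<Rightarrow> idx" where "topI t = ((0,0), {0..<t})"

lemma topI_basis[simp]: "topI t \<in> basis t" by (simp add: topI_def basis_iff Z4sq_def)

lemma Delta_mono_top_left:
  assumes b: "b \<in> basis t"
  shows "Delta_mono d u (fst b) (snd b) (topI t, x) =
     (if b = topI t then (if x = (md (usum u {0..<t}), {}) then 1 else 0) else 0)"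
proof -
  obtain v r where bv: "b = (v, r)" by (cases b)
  have v: "v \<in> Z4sq" and r: "r \<subseteq> {0..<t}" using b bv by (auto simp: basis_iff)
  have fr: "finite r" using r finite_subset by blast
  have mv: "md v = v" using v md_id by blast
  show ?thesis
  proof (cases "b = topI t")
    case True
    then have vr: "v = (0,0)" "r = {0..<t}" using bv by (auto simp: topI_def)
    have "Delta_mono d u v r (topI t, x) = ip (- reorder_exp d u r r) * bvec2 ((md v, r), (md (vadd v (usum u r)), r - r)) (topI t, x)"
      unfolding Delta_mono_def
      by (rule sum_single) (auto simp: fr bvec2_def topI_def vr mv)
    then show ?thesis using True vr bv by (simp add: reorder_exp_def bvec2_def topI_def md_def)
  next
    case False
    have "Delta_mono d u v r (topI t, x) = 0"
      unfolding Delta_mono_def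
    proof (rule sum.neutral, rule ballI)
      fix S assume S: "S \<in> Pow r"
      have "(md v, S) \<noteq> ((0,0), {0..<t})"
      proof
        assume e: "(md v, S) = ((0,0), {0..<t})"
        then have "v = (0,0)" "S = {0..<t}" using mv by auto
        then have "r = {0..<t}" using S r by auto
        then show False using False bv \<open>v = (0,0)\<close> by (simp add: topI_def)
      qed
      then show "ip (- reorder_exp d u r S) * bvec2 ((md v, S), md (vadd v (usum u S)), r - S) (topI t, x) = 0"
        by (auto simp: bvec2_def topI_def)
    qed
    then show ?thesis using False bv by simp
  qed
qed

lemma Delta_mono_top_right:
  assumes b: "b \<in> basis t"
  shows "Delta_mono d u (fst b) (snd b) (x, topI t) =
     (if b = topI t then (if x = oneI then 1 else 0) else 0)"
proof -
  obtain v r where bv: "b = (v, r)" by (cases b)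
  have v: "v \<in> Z4sq" and r: "r \<subseteq> {0..<t}" using b bv by (auto simp: basis_iff)
  have fr: "finite r" using r finite_subset by blast
  have mv: "md v = v" using v md_id by blast
  show ?thesis
  proof (cases "b = topI t")
    case True
    then have vr: "v = (0,0)" "r = {0..<t}" using bv by (auto simp: topI_def)
    have "Delta_mono d u v r (x, topI t) = ip (- reorder_exp d u r {}) * bvec2 ((md v, {}), (md (vadd v (usum u {})), r - {})) (x, topI t)"
      unfolding Delta_mono_def
      by (rule sum_single) (auto simp: fr bvec2_def topI_def vr mv)
    then show ?thesis using True vr bv by (simp add: reorder_exp_def bvec2_def topI_def md_def usum_def oneI_def)
  next
    case False
    have "Delta_mono d u v r (x, topI t) = 0"
      unfolding Delta_mono_def
    proof (rule sum.neutral, rule ballI)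
      fix S assume S: "S \<in> Pow r"
      have "(md (vadd v (usum u S)), r - S) \<noteq> ((0,0), {0..<t})"
      proof
        assume e: "(md (vadd v (usum u S)), r - S) = ((0,0), {0..<t})"
        then have "r - S = {0..<t}" by auto
        then have rS: "r = {0..<t}" "S = {}" using S r by auto
        then have "md v = (0,0)" using e by (simp add: usum_def)
        then show False using False bv rS mv by (simp add: topI_def)
      qed
      then show "ip (- reorder_exp d u r S) * bvec2 ((md v, S), md (vadd v (usum u S)), r - S) (x, topI t) = 0"
        by (auto simp: bvec2_def topI_def)
    qed
    then show ?thesis using False bv by simp
  qed
qed

lemma two_sided_integral_topI:
  assumes U: "md (usum u {0..<t}) = (0,0)"
    and lam: "lam = (\<lambda>x. if x = topI t then 1 else 0)"
  shows "two_sided_integral t d u lam"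
  unfolding two_sided_integral_def
proof (intro ballI conjI)
  fix h :: elt
  have ap: "ap t lam h = h (topI t)"
    unfolding ap_def lam by (subst sum_single[of _ "topI t"]) auto
  show "(\<lambda>x. \<Sum>b\<in>basis t. lam b * Delta t d u h (b, x)) = smul (ap t lam h) one"
  proof
    fix x
    have "(\<Sum>b\<in>basis t. lam b * Delta t d u h (b, x)) = Delta t d u h (topI t, x)"
      unfolding lam by (subst sum_single[of _ "topI t"]) auto
    also have "\<dots> = (\<Sum>b\<in>basis t. h b * Delta_mono d u (fst b) (snd b) (topI t, x))" by (rule Delta_expand)
    also have "\<dots> = h (topI t) * (if x = oneI then 1 else 0)"
      by (subst sum_single[of _ "topI t"]) (auto simp: Delta_mono_top_left U oneI_def)
    finally show "(\<Sum>b\<in>basis t. lam b * Delta t d u h (b, x)) = smul (ap t lam h) one x"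
      by (simp add: ap smul_def one_def bvec_def)
  qed
  show "(\<lambda>x. \<Sum>b\<in>basis t. Delta t d u h (x, b) * lam b) = smul (ap t lam h) one"
  proof
    fix x
    have "(\<Sum>b\<in>basis t. Delta t d u h (x, b) * lam b) = Delta t d u h (x, topI t)"
      unfolding lam by (subst sum_single[of _ "topI t"]) auto
    also have "\<dots> = (\<Sum>b\<in>basis t. h b * Delta_mono d u (fst b) (snd b) (x, topI t))" by (rule Delta_expand)
    also have "\<dots> = h (topI t) * (if x = oneI then 1 else 0)"
      by (subst sum_single[of _ "topI t"]) (auto simp: Delta_mono_top_right)
    finally show "(\<Sum>b\<in>basis t. Delta t d u h (x, b) * lam b) = smul (ap t lam h) one x"
      by (simp add: ap smul_def one_def bvec_def)
  qed
qed

definition KsumX :: "complex \<Rightarrow> nat set \<Rightarrow> elt" where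
  "KsumX c P = (\<lambda>x. \<Sum>q\<in>Z4sq. c * bvec (q, P) x)"

lemma KsumX_in_carrier: "P \<subseteq> {0..<t} \<Longrightarrow> KsumX c P \<in> carrier t"
  unfolding carrier_def KsumX_def
proof (intro CollectI allI impI sum.neutral ballI)
  fix x q assume "P \<subseteq> {0..<t}" "x \<notin> basis t" "q \<in> Z4sq"
  then have "(q, P) \<noteq> x" by (auto simp: basis_iff)
  then show "c * bvec (q, P) x = 0" by (simp add: bvec_def)
qed

lemma sum_KsumX_transl: "(\<Sum>q\<in>Z4sq. c * bvec (md (vadd w q), P) x) = KsumX c P x"
  unfolding KsumX_def using sum_transl[of "\<lambda>q. c * bvec (q, P) x" w] by (simp add: vadd_comm)

lemma mult_bvec_KsumX_top:
  assumes b: "b \<in> basis t"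
  shows "mult t d u (bvec b) (KsumX c {0..<t}) = smul (if snd b = {} then 1 else 0) (KsumX c {0..<t})"
proof -
  let ?F = "{0..<t}"
  obtain w s where bw: "b = (w, s)" and s: "s \<subseteq> ?F" using b by (cases b) (auto simp: basis_iff)
  have qb: "(\<lambda>q. (q, ?F)) ` Z4sq \<subseteq> basis t" by (auto simp: basis_iff)
  have "mult t d u (bvec b) (KsumX c ?F)
      = (\<lambda>x. \<Sum>j\<in>{()}. \<Sum>q\<in>Z4sq. 1 * c * mcoef d u b (q, ?F) * bvec (mres b (q, ?F)) x)"
    unfolding KsumX_def by (subst bvec_sparse, rule mult_sparse[OF _ _ _ qb]) (use b in auto)
  also have "\<dots> = smul (if snd b = {} then 1 else 0) (KsumX c ?F)"
  proof (cases "s = {}")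
    case True
    then show ?thesis by (simp add: bw smul_def sum_KsumX_transl mult.commute)
  next
    case False
    then have "s \<inter> ?F \<noteq> {}" using s by auto
    then have "mcoef d u b (q, ?F) = 0" for q by (simp add: bw mcoef_overlap)
    then show ?thesis using False by (simp add: bw smul_def)
  qed
  finally show ?thesis .
qed

lemma mult_KsumX_top_bvec:
  assumes b: "b \<in> basis t" and D: "\<And>w. [\<Sum>k\<in>{0..<t}. dot (d k) w = 0] (mod 4)"
  shows "mult t d u (KsumX c {0..<t}) (bvec b) = smul (if snd b = {} then 1 else 0) (KsumX c {0..<t})"
proof -
  let ?F = "{0..<t}"
  obtain w s where bw: "b = (w, s)" and s: "s \<subseteq> ?F" using b by (cases b) (auto simp: basis_iff)
  have qb: "(\<lambda>q. (q, ?F)) ` Z4sq \<subseteq> basis t" by (auto simp: basis_iff)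
  have "mult t d u (KsumX c ?F) (bvec b)
      = (\<lambda>x. \<Sum>q\<in>Z4sq. \<Sum>j\<in>{()}. c * 1 * mcoef d u (q, ?F) b * bvec (mres (q, ?F) b) x)"
    unfolding KsumX_def by (subst bvec_sparse, rule mult_sparse[OF _ _ qb]) (use b in auto)
  also have "\<dots> = smul (if snd b = {} then 1 else 0) (KsumX c ?F)"
  proof (cases "s = {}")
    case True
    have "mcoef d u (q, ?F) (w, {}) = 1" for q
      unfolding mcoef_K_right using ip_cong[OF cong_uminus[OF D[of w]]] by simp
    then show ?thesis using True by (simp add: bw smul_def vadd_comm[of _ w] sum_KsumX_transl)
  next
    case False
    then have "?F \<inter> s \<noteq> {}" using s by auto
    then have "mcoef d u (q, ?F) b = 0" for q by (simp add: bw mcoef_overlap)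
    then show ?thesis using False by (simp add: bw smul_def)
  qed
  finally show ?thesis .
qed

lemma two_sided_cointegral_KsumX_top:
  assumes D: "\<And>w. [\<Sum>k\<in>{0..<t}. dot (d k) w = 0] (mod 4)"
  shows "two_sided_cointegral t d u (KsumX c {0..<t})"
  unfolding two_sided_cointegral_def
proof (intro conjI ballI)
  fix h assume h: "h \<in> carrier t"
  have counit: "smul (counit t h) (KsumX c {0..<t})
      = (\<lambda>x. \<Sum>b\<in>basis t. h b * smul (if snd b = {} then 1 else 0) (KsumX c {0..<t}) x)"
    by (auto simp: smul_def counit_def sum_distrib_right intro!: sum.cong)
  show "mult t d u h (KsumX c {0..<t}) = smul (counit t h) (KsumX c {0..<t})"
    unfolding mult_carrier_left[OF h] counit by (simp add: mult_bvec_KsumX_top)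
  show "mult t d u (KsumX c {0..<t}) h = smul (counit t h) (KsumX c {0..<t})"
    unfolding mult_carrier_right[OF h] counit by (simp add: mult_KsumX_top_bvec D)
qed (rule KsumX_in_carrier, simp)

lemma mcoef_Xgen_K_indep: "mcoef d u (q, P) ((0,0),{k}) = mcoef d u ((0,0), P) ((0,0),{k})"
  by (simp add: mcoef_def)

lemma mcoef_Xgen_nonzero: "finite P \<Longrightarrow> k \<notin> P \<Longrightarrow> mcoef d u ((0,0), P) ((0,0),{k}) \<noteq> 0"
  by (simp add: mcoef_def prod_zero_iff)

lemma KsumX_mult_Xgen:
  assumes P: "P \<subseteq> {0..<t}" and kt: "k < t"
  shows "mult t d u (KsumX c P) (Xgen k) = KsumX (c * mcoef d u ((0,0), P) ((0,0),{k})) (insert k P)"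
proof -
  have b1: "(\<lambda>q. (q, P)) ` Z4sq \<subseteq> basis t" using P by (auto simp: basis_iff)
  have b2: "(\<lambda>j. ((0::int,0::int),{k})) ` {()} \<subseteq> basis t" using kt by (auto simp: basis_iff Z4sq_def)
  have "mult t d u (KsumX c P) (Xgen k)
     = (\<lambda>x. \<Sum>q\<in>Z4sq. \<Sum>j\<in>{()}. c * 1 * mcoef d u (q, P) ((0,0),{k}) * bvec (mres (q, P) ((0,0),{k})) x)"
    unfolding Xgen_sparse KsumX_def by (subst mult_sparse[OF _ _ b1 b2]) auto
  also have "\<dots> = KsumX (c * mcoef d u ((0,0), P) ((0,0),{k})) (insert k P)"
    unfolding KsumX_def
    by (rule ext, rule sum.cong[OF refl], subst mcoef_Xgen_K_indep, simp add: md_id insert_commute)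
  finally show ?thesis .
qed

lemma foldl_KsumX_mult_Xgen:
  assumes "distinct xs" "set xs \<subseteq> {0..<t}" "P \<subseteq> {0..<t}" "set xs \<inter> P = {}" "c \<noteq> 0"
  shows "\<exists>c'. c' \<noteq> 0 \<and> foldl (\<lambda>acc k. mult t d u acc (Xgen k)) (KsumX c P) xs = KsumX c' (P \<union> set xs)"
  using assms
proof (induction xs arbitrary: c P)
  case Nil
  then show ?case by auto
next
  case (Cons k xs)
  have fP: "finite P" using Cons.prems(3) finite_subset by blast
  have kP: "k \<notin> P" "k < t" using Cons.prems by auto
  have "c * mcoef d u ((0,0), P) ((0,0),{k}) \<noteq> 0"
    using Cons.prems(5) mcoef_Xgen_nonzero[OF fP kP(1)] by simp
  then have "\<exists>c'. c' \<noteq> 0 \<and> foldl (\<lambda>acc k. mult t d u acc (Xgen k))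
      (KsumX (c * mcoef d u ((0,0), P) ((0,0),{k})) (insert k P)) xs = KsumX c' (insert k P \<union> set xs)"
    by (intro Cons.IH) (use Cons.prems in auto)
  then show ?case by (simp add: KsumX_mult_Xgen[OF Cons.prems(3) kP(2)])
qed

lemma sum_Kpow_eq_KsumX: "(\<lambda>x. \<Sum>a\<in>{0..3::int}. \<Sum>b\<in>{0..3::int}. Kpow (a, b) x) = KsumX 1 {}"
proof
  fix x
  have "(\<Sum>a\<in>{0..3::int}. \<Sum>b\<in>{0..3::int}. Kpow (a, b) x) = (\<Sum>q\<in>Z4sq. Kpow q x)"
    by (simp add: sum.cartesian_product Z4sq_def)
  also have "\<dots> = KsumX 1 {} x"
    unfolding KsumX_def by (rule sum.cong) (auto simp: Kpow_def md_id)
  finally show "(\<Sum>a\<in>{0..3::int}. \<Sum>b\<in>{0..3::int}. Kpow (a, b) x) = KsumX 1 {} x" .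
qed

definition N1_order :: "nat \<Rightarrow> nat \<Rightarrow> nat list" where
  "N1_order t1 t2 = [0..<t1] @ map (Zp t1) [1..<t2+1] @ map (Zm t1) [1..<t2+1]"

lemma set_N1_order: "set (N1_order t1 t2) = {0..<tN1 t1 t2}"
proof
  show "set (N1_order t1 t2) \<subseteq> {0..<tN1 t1 t2}"
    by (auto simp: N1_order_def Zp_def Zm_def tN1_def)
  show "{0..<tN1 t1 t2} \<subseteq> set (N1_order t1 t2)"
  proof
    fix k assume k: "k \<in> {0..<tN1 t1 t2}"
    show "k \<in> set (N1_order t1 t2)"
    proof (cases "k < t1")
      case True then show ?thesis by (simp add: N1_order_def)
    next
      case False
      define m where "m = k - t1"
      have km: "k = t1 + m" "m < 2 * t2" using False k by (auto simp: m_def tN1_def)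
      define l where "l = m div 2 + 1"
      have l: "l \<in> {1..<t2+1}" using km by (auto simp: l_def)
      show ?thesis
      proof (cases "even m")
        case True
        then have "k = Zp t1 l" using km by (auto simp: Zp_def l_def)
        then have "k \<in> Zp t1 ` {1..<t2+1}" using l by blast
        then show ?thesis unfolding N1_order_def set_append set_map set_upt by blast
      next
        case False
        then have "k = Zm t1 l" using km by (auto simp: Zm_def l_def)
        then have "k \<in> Zm t1 ` {1..<t2+1}" using l by blast
        then show ?thesis unfolding N1_order_def set_append set_map set_upt by blast
      qed
    qed
  qed
qed

lemma distinct_N1_order: "distinct (N1_order t1 t2)"
proof -
  have i1: "inj_on (Zp t1) {1..<t2+1}" by (auto simp: inj_on_def Zp_def)
  have i2: "inj_on (Zm t1) {1..<t2+1}" by (auto simp: inj_on_def Zm_def)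
  have d: "Zp t1 l \<noteq> Zm t1 l'" for l l'
  proof
    assume "Zp t1 l = Zm t1 l'"
    then have "2 * (l - 1) = 2 * (l' - 1) + 1" by (simp add: Zp_def Zm_def)
    then show False by presburger
  qed
  have s1: "{0..<t1} \<inter> (Zp t1 ` {1..<t2+1} \<union> Zm t1 ` {1..<t2+1}) = {}" by (auto simp: Zp_def Zm_def)
  have s2: "Zp t1 ` {1..<t2+1} \<inter> Zm t1 ` {1..<t2+1} = {}" using d by auto
  show ?thesis unfolding N1_order_def distinct_append distinct_map set_map set_append set_upt
    using i1 i2 s1 s2 by simp
qed

lemma LambdaN1_eq_KsumX: "\<exists>c. c \<noteq> 0 \<and> LambdaN1 t1 t2 = KsumX c {0..<tN1 t1 t2}"
proof -
  have "\<exists>c. c \<noteq> 0 \<and> foldl (\<lambda>acc k. mult (tN1 t1 t2) (dN1 t1) (uN1 t1) acc (Xgen k))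
      (KsumX 1 {}) (N1_order t1 t2) = KsumX c ({} \<union> set (N1_order t1 t2))"
    by (rule foldl_KsumX_mult_Xgen) (auto simp: distinct_N1_order set_N1_order)
  then show ?thesis unfolding LambdaN1_def sum_Kpow_eq_KsumX N1_order_def[symmetric] set_N1_order by simp
qed

lemma sum_upto_add2:
  fixes f :: "nat \<Rightarrow> int"
  shows "(\<Sum>k\<in>{0..<n + 2}. f k) = (\<Sum>k\<in>{0..<n}. f k) + f n + f (n + 1)"
  by (simp add: numeral_2_eq_2)

lemma uN1_sums: "(\<Sum>k\<in>{0..<tN1 t1 t2}. fst (uN1 t1 k)) = int t1 \<and> (\<Sum>k\<in>{0..<tN1 t1 t2}. snd (uN1 t1 k)) = int t1"
proof (induction t2)
  case 0
  have "(\<Sum>k\<in>{0..<t1}. fst (uN1 t1 k)) = (\<Sum>k\<in>{0..<t1}. 1)" by (rule sum.cong) (auto simp: uN1_def)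
  moreover have "(\<Sum>k\<in>{0..<t1}. snd (uN1 t1 k)) = (\<Sum>k\<in>{0..<t1}. 1)" by (rule sum.cong) (auto simp: uN1_def)
  ultimately show ?case by (simp add: tN1_def)
next
  case (Suc t2)
  have e: "tN1 t1 (Suc t2) = tN1 t1 t2 + 2" by (simp add: tN1_def)
  have a: "uN1 t1 (tN1 t1 t2) = (2, 1)" by (simp add: uN1_def tN1_def)
  have b: "uN1 t1 (tN1 t1 t2 + 1) = (-2, -1)" by (simp add: uN1_def tN1_def)
  show ?case unfolding e sum_upto_add2 a b using Suc by simp
qed

lemma dN1_sums: "(\<Sum>k\<in>{0..<tN1 t1 t2}. fst (dN1 t1 k)) = int t1 \<and> (\<Sum>k\<in>{0..<tN1 t1 t2}. snd (dN1 t1 k)) = int t1"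
proof (induction t2)
  case 0
  have "(\<Sum>k\<in>{0..<t1}. fst (dN1 t1 k)) = (\<Sum>k\<in>{0..<t1}. 1)" by (rule sum.cong) (auto simp: dN1_def)
  moreover have "(\<Sum>k\<in>{0..<t1}. snd (dN1 t1 k)) = (\<Sum>k\<in>{0..<t1}. 1)" by (rule sum.cong) (auto simp: dN1_def)
  ultimately show ?case by (simp add: tN1_def)
next
  case (Suc t2)
  have e: "tN1 t1 (Suc t2) = tN1 t1 t2 + 2" by (simp add: tN1_def)
  have a: "dN1 t1 (tN1 t1 t2) = (1, 0)" by (simp add: dN1_def tN1_def)
  have b: "dN1 t1 (tN1 t1 t2 + 1) = (-1, 0)" by (simp add: dN1_def tN1_def)
  show ?case unfolding e sum_upto_add2 a b using Suc by simp
qed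

lemma usum_uN1: "4 dvd t1 \<Longrightarrow> md (usum (uN1 t1) {0..<tN1 t1 t2}) = (0,0)"
  using uN1_sums[of t1 t2] by (simp add: usum_def md_def) presburger

lemma sum_dot_dN1_cong: "4 dvd t1 \<Longrightarrow> [\<Sum>k\<in>{0..<tN1 t1 t2}. dot (dN1 t1 k) w = 0] (mod 4)"
proof -
  assume t: "4 dvd t1"
  have "(\<Sum>k\<in>{0..<tN1 t1 t2}. dot (dN1 t1 k) w)
      = (\<Sum>k\<in>{0..<tN1 t1 t2}. fst (dN1 t1 k)) * fst w + (\<Sum>k\<in>{0..<tN1 t1 t2}. snd (dN1 t1 k)) * snd w"
    by (simp add: dot_def sum.distrib sum_distrib_right)
  also have "\<dots> = int t1 * (fst w + snd w)" using dN1_sums[of t1 t2] by (simp add: algebra_simps)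
  moreover have "(4::int) dvd int t1" using t by presburger
  ultimately show ?thesis by (simp add: cong_0_iff)
qed

lemma N1_integrals:
  assumes "4 dvd t1"
  shows "two_sided_cointegral (tN1 t1 t2) (dN1 t1) (uN1 t1) (LambdaN1 t1 t2) \<and>
          two_sided_integral (tN1 t1 t2) (dN1 t1) (uN1 t1) (lambdaN1 t1 t2) \<and>
          unimodular (tN1 t1 t2) (dN1 t1) (uN1 t1)"
proof -
  obtain c where c: "c \<noteq> 0" "LambdaN1 t1 t2 = KsumX c {0..<tN1 t1 t2}"
    using LambdaN1_eq_KsumX by blast
  have co: "two_sided_cointegral (tN1 t1 t2) (dN1 t1) (uN1 t1) (LambdaN1 t1 t2)"
    unfolding c(2) by (rule two_sided_cointegral_KsumX_top[OF sum_dot_dN1_cong[OF assms]])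
  have int: "two_sided_integral (tN1 t1 t2) (dN1 t1) (uN1 t1) (lambdaN1 t1 t2)"
    by (rule two_sided_integral_topI[OF usum_uN1[OF assms]]) (auto simp: lambdaN1_def topI_def)
  have "LambdaN1 t1 t2 ((0,0), {0..<tN1 t1 t2}) = c"
    unfolding c(2) KsumX_def by (subst sum_single[of _ "(0,0)"]) (auto simp: bvec_def Z4sq_def)
  then have "LambdaN1 t1 t2 \<noteq> (\<lambda>_. 0)" using c(1) by auto
  then show ?thesis using co int unfolding unimodular_def by blast
qed

section \<open>The bilinear form of R_z\<close>

definition rform :: "int \<times> int \<Rightarrow> int \<times> int \<Rightarrow> int" where
  "rform a b = 3 * fst a * snd b + snd a * fst b + 2 * snd a * snd b"

definition Rcoef :: "int \<times> int \<Rightarrow> int \<times> int \<Rightarrow> complex" where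
  "Rcoef a b = (1/16) * ip (- rform a b)"

(* zmul v = v z for z = ((2,3),(1,0)) and zinv is its inverse mod 4; since dot (zinv b) a = rform a b,
   summing out v in R_z leaves Rcoef a b as the coefficient of K^a (x) K^b. *)
definition zmul :: "int \<times> int \<Rightarrow> int \<times> int" where "zmul v = (2 * fst v + snd v, 3 * fst v)"

definition zinv :: "int \<times> int \<Rightarrow> int \<times> int" where "zinv b = (3 * snd b, fst b + 2 * snd b)"

lemma zinv_zmul: "v \<in> Z4sq \<Longrightarrow> md (zinv (md (zmul v))) = v"
  unfolding Z4sq_explicit by (auto simp: zinv_def zmul_def md_def)

lemma zmul_zinv: "b \<in> Z4sq \<Longrightarrow> md (zmul (md (zinv b))) = b"
  unfolding Z4sq_explicit by (auto simp: zinv_def zmul_def md_def)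

lemma ip_dot_zinv: "ip (- dot (md (zinv b)) a) = ip (- rform a b)"
proof (rule ip_cong)
  have "[dot (md (zinv b)) a = dot (zinv b) a] (mod 4)"
    unfolding dot_def md_def fst_conv snd_conv by (intro cong_add cong_mult cong_refl cong_mod_leftI)
  moreover have "dot (zinv b) a = rform a b" by (simp add: dot_def zinv_def rform_def algebra_simps)
  ultimately show "[- dot (md (zinv b)) a = - rform a b] (mod 4)" by (simp add: cong_uminus)
qed

lemma rform_md: "[rform (md a) (md b) = rform a b] (mod 4)"
  unfolding rform_def md_def fst_conv snd_conv
  by (intro cong_add cong_mult cong_refl cong_mod_leftI)

lemma rform_md_left: "[rform (md a) b = rform a b] (mod 4)"
  unfolding rform_def md_def fst_conv snd_conv
  by (intro cong_add cong_mult cong_refl cong_mod_leftI)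

lemma rform_md_right: "[rform a (md b) = rform a b] (mod 4)"
  unfolding rform_def md_def fst_conv snd_conv
  by (intro cong_add cong_mult cong_refl cong_mod_leftI)

lemma rform_vadd_left: "rform (vadd a a') b = rform a b + rform a' b"
  by (simp add: rform_def vadd_def algebra_simps)

lemma rform_vadd_right: "rform a (vadd b b') = rform a b + rform a b'"
  by (simp add: rform_def vadd_def algebra_simps)

lemma rform_vneg_left: "rform (vneg a) b = - rform a b"
  by (simp add: rform_def vneg_def algebra_simps)

lemma rform_vneg_right: "rform a (vneg b) = - rform a b"
  by (simp add: rform_def vneg_def algebra_simps)

lemma rform_vsub: "rform (vsub x q1) (vsub y q2) = rform x y - rform x q2 - rform q1 y + rform q1 q2"
  by (simp add: vsub_def rform_vadd_left rform_vadd_right rform_vneg_left rform_vneg_right)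

lemma rform_vsub_left: "rform (vsub a b) c = rform a c - rform b c"
  by (simp add: vsub_def rform_vadd_left rform_vneg_left)

lemma rform_vsub_right: "rform a (vsub b c) = rform a b - rform a c"
  by (simp add: vsub_def rform_vadd_right rform_vneg_right)

lemma rform_sym: "rform a b + rform b a = 4 * (fst a * snd b + snd a * fst b + snd a * snd b)"
  by (simp add: rform_def algebra_simps)

lemma rform_antisym_cong: "[rform a b + rform b a = 0] (mod 4)"
  by (simp add: rform_sym cong_0_iff)

lemma rform_diag_cong: "b \<in> Z4sq \<Longrightarrow> [rform b b = 2 * snd b] (mod 4)"
  unfolding Z4sq_explicit by (auto simp: rform_def cong_def)

lemma rform_usum_left: "rform (usum u S) y = (\<Sum>k\<in>S. rform (u k) y)"
  by (simp add: rform_def usum_def sum_distrib_left sum_distrib_right sum.distrib mult.assoc)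

lemma rform_usum_right: "rform x (usum u S) = (\<Sum>k\<in>S. rform x (u k))"
  by (simp add: rform_def usum_def sum_distrib_left sum_distrib_right sum.distrib mult.assoc)

lemma sum_ip_rform_right: "(\<Sum>b\<in>Z4sq. ip (rform a b)) = (if md a = (0,0) then 16 else 0)"
proof -
  have "(\<Sum>b\<in>Z4sq. ip (rform a b)) = (\<Sum>b\<in>Z4sq. ip (snd a * fst b + (3 * fst a + 2 * snd a) * snd b))"
    by (rule sum.cong) (auto simp: rform_def algebra_simps)
  also have "\<dots> = (if md a = (0,0) then 16 else 0)"
    unfolding sum_ip_linear by (simp add: md_def prod_eq_iff) presburger
  finally show ?thesis .
qed

lemma sum_ip_rform_left: "(\<Sum>a\<in>Z4sq. ip (rform a b)) = (if md b = (0,0) then 16 else 0)"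
proof -
  have "(\<Sum>a\<in>Z4sq. ip (rform a b)) = (\<Sum>a\<in>Z4sq. ip ((3 * snd b) * fst a + (fst b + 2 * snd b) * snd a))"
    by (rule sum.cong) (auto simp: rform_def algebra_simps)
  also have "\<dots> = (if md b = (0,0) then 16 else 0)"
    unfolding sum_ip_linear by (simp add: md_def prod_eq_iff) presburger
  finally show ?thesis .
qed

lemma rform_vsub_cong:
  "[- rform q2 q1 - rform (md (vsub x q1)) (md (vsub y q2)) = - rform x y + rform q1 y + rform x q2] (mod 4)"
proof -
  have "[- rform q2 q1 - rform (md (vsub x q1)) (md (vsub y q2)) = - rform q2 q1 - rform (vsub x q1) (vsub y q2)] (mod 4)"
    by (intro cong_diff cong_refl rform_md)
  moreover have "[- rform q2 q1 - rform (vsub x q1) (vsub y q2) = - rform x y + rform q1 y + rform x q2] (mod 4)"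
  proof -
    have "(- rform q2 q1 - rform (vsub x q1) (vsub y q2)) - (- rform x y + rform q1 y + rform x q2)
        = - (rform q1 q2 + rform q2 q1)" unfolding rform_vsub by simp
    also have "\<dots> = 4 * (- (fst q1 * snd q2 + snd q1 * fst q2 + snd q1 * snd q2))" unfolding rform_sym by simp
    finally show ?thesis unfolding cong_iff_dvd_diff by simp
  qed
  ultimately show ?thesis by (rule cong_trans)
qed

lemma Rcoef_mult_ip: "Rcoef x y * ip e = (1/16) * ip (- rform x y + e)"
  unfolding Rcoef_def ip_add[symmetric] by simp

section \<open>The group algebra of \<int>/4 \<times> \<int>/4 and its tensor powers\<close>

definition Ktens :: "(int \<times> int \<Rightarrow> int \<times> int \<Rightarrow> complex) \<Rightarrow> elt2" where
  "Ktens \<phi> = (\<lambda>p. \<Sum>q\<in>Z4sq \<times> Z4sq. \<phi> (fst q) (snd q) * bvec2 ((fst q, {}), (snd q, {})) p)"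

lemma Ktens_at: "x \<in> Z4sq \<Longrightarrow> y \<in> Z4sq \<Longrightarrow> Ktens \<phi> ((x, {}), (y, {})) = \<phi> x y"
  unfolding Ktens_def by (subst sum_single[of _ "(x, y)"]) (auto simp: bvec2_def)

lemma Ktens_off: "\<not> (\<exists>x y. x \<in> Z4sq \<and> y \<in> Z4sq \<and> p = ((x, {}), (y, {}))) \<Longrightarrow> Ktens \<phi> p = 0"
  unfolding Ktens_def by (rule sum.neutral) (auto simp: bvec2_def)

lemma Ktens_eqI: "(\<And>x y. x \<in> Z4sq \<Longrightarrow> y \<in> Z4sq \<Longrightarrow> \<phi> x y = \<psi> x y) \<Longrightarrow> Ktens \<phi> = Ktens \<psi>"
  unfolding Ktens_def by (intro ext sum.cong) auto

lemma Ktens_nonzero_imp: "Ktens \<phi> (a, b) \<noteq> 0 \<Longrightarrow> \<exists>x y. x \<in> Z4sq \<and> y \<in> Z4sq \<and> a = (x, {}) \<and> b = (y, {})"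
  using Ktens_off by blast

lemma Ktens_sum:
  "(\<Sum>a\<in>basis t. \<Sum>b\<in>basis t. Ktens \<phi> (a, b) * F a b) = (\<Sum>q\<in>Z4sq \<times> Z4sq. \<phi> (fst q) (snd q) * F (fst q, {}) (snd q, {}))"
proof -
  have "(\<Sum>a\<in>basis t. \<Sum>b\<in>basis t. Ktens \<phi> (a, b) * F a b)
      = (\<Sum>a\<in>basis t. \<Sum>b\<in>basis t. \<Sum>q\<in>Z4sq \<times> Z4sq. \<phi> (fst q) (snd q) * (bvec2 ((fst q, {}), (snd q, {})) (a, b) * F a b))"
    by (simp add: Ktens_def sum_distrib_right mult.assoc)
  also have "\<dots> = (\<Sum>a\<in>basis t. \<Sum>q\<in>Z4sq \<times> Z4sq. \<Sum>b\<in>basis t. \<phi> (fst q) (snd q) * (bvec2 ((fst q, {}), (snd q, {})) (a, b) * F a b))"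
    by (rule sum.cong[OF refl], rule sum.swap)
  also have "\<dots> = (\<Sum>q\<in>Z4sq \<times> Z4sq. \<Sum>a\<in>basis t. \<Sum>b\<in>basis t. \<phi> (fst q) (snd q) * (bvec2 ((fst q, {}), (snd q, {})) (a, b) * F a b))"
    by (rule sum.swap)
  also have "\<dots> = (\<Sum>q\<in>Z4sq \<times> Z4sq. \<phi> (fst q) (snd q) * F (fst q, {}) (snd q, {}))"
  proof (rule sum.cong[OF refl])
    fix q :: "(int \<times> int) \<times> (int \<times> int)" assume q: "q \<in> Z4sq \<times> Z4sq"
    have a: "(fst q, {}) \<in> basis t" and b: "(snd q, {}) \<in> basis t" using q by auto
    have "(\<Sum>a\<in>basis t. \<Sum>b\<in>basis t. \<phi> (fst q) (snd q) * (bvec2 ((fst q, {}), (snd q, {})) (a, b) * F a b))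
       = (\<Sum>b\<in>basis t. \<phi> (fst q) (snd q) * (bvec2 ((fst q, {}), (snd q, {})) ((fst q, {}), b) * F (fst q, {}) b))"
      by (rule sum_single[OF _ a]) (auto simp: bvec2_def intro!: sum.neutral)
    also have "\<dots> = \<phi> (fst q) (snd q) * F (fst q, {}) (snd q, {})"
      by (subst sum_single[OF _ b]) (auto simp: bvec2_def)
    finally show "(\<Sum>a\<in>basis t. \<Sum>b\<in>basis t. \<phi> (fst q) (snd q) * (bvec2 ((fst q, {}), (snd q, {})) (a, b) * F a b))
       = \<phi> (fst q) (snd q) * F (fst q, {}) (snd q, {})" .
  qed
  finally show ?thesis .
qed

definition Kconv :: "(int \<times> int \<Rightarrow> int \<times> int \<Rightarrow> complex) \<Rightarrow> (int \<times> int \<Rightarrow> int \<times> int \<Rightarrow> complex)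
    \<Rightarrow> int \<times> int \<Rightarrow> int \<times> int \<Rightarrow> complex" where
  "Kconv \<phi> \<psi> x y = (\<Sum>q\<in>Z4sq \<times> Z4sq. \<phi> (fst q) (snd q) * \<psi> (md (vsub x (fst q))) (md (vsub y (snd q))))"

lemma Ktens_mult:
  "mult2 t d u (Ktens \<phi>) (Ktens \<psi>) = Ktens (Kconv \<phi> \<psi>)"
proof -
  let ?k = "\<lambda>q::(int \<times> int) \<times> (int \<times> int). ((fst q, {}::nat set), (snd q, {}::nat set))"
  have b: "?k ` (Z4sq \<times> Z4sq) \<subseteq> basis t \<times> basis t" by auto
  have "mult2 t d u (Ktens \<phi>) (Ktens \<psi>) = (\<lambda>p. \<Sum>q\<in>Z4sq \<times> Z4sq. \<Sum>q'\<in>Z4sq \<times> Z4sq.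
     \<phi> (fst q) (snd q) * \<psi> (fst q') (snd q') * mcoef2 d u (?k q) (?k q') * bvec2 (mres2 (?k q) (?k q')) p)"
    unfolding Ktens_def by (subst mult2_sparse[OF _ _ b b]) auto
  also have "\<dots> = (\<lambda>p. \<Sum>q\<in>Z4sq \<times> Z4sq. \<phi> (fst q) (snd q) * (\<Sum>q'\<in>Z4sq \<times> Z4sq.
     \<psi> (fst q') (snd q') * bvec2 ((md (vadd (fst q) (fst q')), {}), (md (vadd (snd q) (snd q')), {})) p))"
    by (rule ext, rule sum.cong[OF refl]) (simp add: sum_distrib_left mcoef2_def mres2_def mult.assoc)
  also have "\<dots> = (\<lambda>p. \<Sum>q\<in>Z4sq \<times> Z4sq. \<phi> (fst q) (snd q) * (\<Sum>r\<in>Z4sq \<times> Z4sq.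
     \<psi> (md (vsub (fst r) (fst q))) (md (vsub (snd r) (snd q))) * bvec2 ((fst r, {}), (snd r, {})) p))"
  proof (rule ext, rule sum.cong[OF refl])
    fix p and q :: "(int \<times> int) \<times> (int \<times> int)"
    obtain a b where q: "q = (a, b)" by (cases q)
    have "(\<Sum>r\<in>Z4sq \<times> Z4sq. \<psi> (md (vsub (fst r) a)) (md (vsub (snd r) b)) * bvec2 ((fst r, {}), (snd r, {})) p)
       = (\<Sum>r1\<in>Z4sq. \<Sum>r2\<in>Z4sq. \<psi> (md (vsub r1 a)) (md (vsub r2 b)) * bvec2 ((r1, {}), (r2, {})) p)"
      by (simp add: sum_Z4sq2)
    also have "\<dots> = (\<Sum>r1\<in>Z4sq. \<Sum>r2\<in>Z4sq. \<psi> (md (vsub (md (vadd a r1)) a)) (md (vsub (md (vadd b r2)) b))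
        * bvec2 ((md (vadd a r1), {}), (md (vadd b r2), {})) p)"
      by (subst sum_transl_left[of _ a], rule sum.cong[OF refl], subst sum_transl_left[of _ b], rule refl)
    also have "\<dots> = (\<Sum>r1\<in>Z4sq. \<Sum>r2\<in>Z4sq. \<psi> r1 r2 * bvec2 ((md (vadd a r1), {}), (md (vadd b r2), {})) p)"
      by (intro sum.cong refl) (simp add: md_vsub_vadd)
    finally show "\<phi> (fst q) (snd q) * (\<Sum>q'\<in>Z4sq \<times> Z4sq. \<psi> (fst q') (snd q') *
        bvec2 ((md (vadd (fst q) (fst q')), {}), md (vadd (snd q) (snd q')), {}) p)
      = \<phi> (fst q) (snd q) * (\<Sum>r\<in>Z4sq \<times> Z4sq. \<psi> (md (vsub (fst r) (fst q))) (md (vsub (snd r) (snd q))) *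
        bvec2 ((fst r, {}), snd r, {}) p)"
      by (simp add: q sum_Z4sq2)
  qed
  also have "\<dots> = Ktens (Kconv \<phi> \<psi>)"
    unfolding Ktens_def Kconv_def
  proof (rule ext)
    fix p
    let ?P = "\<lambda>q. \<phi> (fst q) (snd q)"
    let ?Q = "\<lambda>q r. \<psi> (md (vsub (fst r) (fst q))) (md (vsub (snd r) (snd q)))"
    let ?b = "\<lambda>r. bvec2 ((fst r, {}), (snd r, {})) p"
    have "(\<Sum>q\<in>Z4sq \<times> Z4sq. ?P q * (\<Sum>r\<in>Z4sq \<times> Z4sq. ?Q q r * ?b r))
        = (\<Sum>q\<in>Z4sq \<times> Z4sq. \<Sum>r\<in>Z4sq \<times> Z4sq. ?P q * (?Q q r * ?b r))"
      by (simp add: sum_distrib_left)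
    also have "\<dots> = (\<Sum>r\<in>Z4sq \<times> Z4sq. \<Sum>q\<in>Z4sq \<times> Z4sq. ?P q * (?Q q r * ?b r))"
      by (rule sum.swap)
    also have "\<dots> = (\<Sum>r\<in>Z4sq \<times> Z4sq. (\<Sum>q\<in>Z4sq \<times> Z4sq. ?P q * ?Q q r) * ?b r)"
      by (simp add: sum_distrib_right mult.assoc)
    finally show "(\<Sum>q\<in>Z4sq \<times> Z4sq. ?P q * (\<Sum>r\<in>Z4sq \<times> Z4sq. ?Q q r * ?b r))
        = (\<Sum>r\<in>Z4sq \<times> Z4sq. (\<Sum>q\<in>Z4sq \<times> Z4sq. ?P q * ?Q q r) * ?b r)" .
  qed
  finally show ?thesis .
qed

lemma Ktens_flip: "flip (Ktens \<phi>) = Ktens (\<lambda>x y. \<phi> y x)"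
proof
  fix p :: "idx \<times> idx"
  obtain a b where p: "p = (a, b)" by (cases p)
  show "flip (Ktens \<phi>) p = Ktens (\<lambda>x y. \<phi> y x) p"
  proof (cases "\<exists>x y. x \<in> Z4sq \<and> y \<in> Z4sq \<and> p = ((x, {}), (y, {}))")
    case True
    then obtain x y where "x \<in> Z4sq" "y \<in> Z4sq" "a = (x, {})" "b = (y, {})" using p by auto
    then show ?thesis by (simp add: flip_def p Ktens_at)
  next
    case False
    then have "\<not> (\<exists>x y. x \<in> Z4sq \<and> y \<in> Z4sq \<and> (b, a) = ((x, {}), (y, {})))" using p by auto
    then show ?thesis using False by (simp add: flip_def p Ktens_off)
  qed
qed

lemma one2_eq_Ktens: "one2 = Ktens (\<lambda>x y. if x = (0,0) \<and> y = (0,0) then 1 else 0)"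
proof
  fix p :: "idx \<times> idx"
  show "one2 p = Ktens (\<lambda>x y. if x = (0,0) \<and> y = (0,0) then 1 else 0) p"
  proof (cases "\<exists>x y. x \<in> Z4sq \<and> y \<in> Z4sq \<and> p = ((x, {}), (y, {}))")
    case True
    then obtain x y where "x \<in> Z4sq" "y \<in> Z4sq" "p = ((x, {}), (y, {}))" by auto
    then show ?thesis by (auto simp: Ktens_at one2_def tens_def one_def bvec_def oneI_def)
  next
    case False
    have "(0::int, 0::int) \<in> Z4sq" by (simp add: Z4sq_def)
    then have "p \<noteq> (oneI, oneI)" using False by (auto simp: oneI_def)
    then have "one2 p = 0" by (cases p) (auto simp: one2_def tens_def one_def bvec_def)
    then show ?thesis using Ktens_off[OF False] by simp
  qed
qed

definition Ktens3 :: "(int \<times> int \<Rightarrow> int \<times> int \<Rightarrow> int \<times> int \<Rightarrow> complex) \<Rightarrow> elt3" where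
  "Ktens3 \<phi> = (\<lambda>p. \<Sum>q\<in>Z4sq \<times> Z4sq \<times> Z4sq. \<phi> (fst q) (fst (snd q)) (snd (snd q)) *
      bvec3 ((fst q, {}), (fst (snd q), {}), (snd (snd q), {})) p)"

definition is_Kmono3 :: "idx \<times> idx \<times> idx \<Rightarrow> bool" where
  "is_Kmono3 p \<longleftrightarrow> (\<exists>x y z. x \<in> Z4sq \<and> y \<in> Z4sq \<and> z \<in> Z4sq \<and> p = ((x, {}), (y, {}), (z, {})))"

lemma Ktens3_at: "x \<in> Z4sq \<Longrightarrow> y \<in> Z4sq \<Longrightarrow> z \<in> Z4sq \<Longrightarrow> Ktens3 \<phi> ((x, {}), (y, {}), (z, {})) = \<phi> x y z"
  unfolding Ktens3_def by (subst sum_single[of _ "(x, y, z)"]) (auto simp: bvec3_def)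

lemma Ktens3_off: "\<not> is_Kmono3 p \<Longrightarrow> Ktens3 \<phi> p = 0"
  unfolding Ktens3_def
proof (rule sum.neutral, rule ballI)
  fix q :: "(int \<times> int) \<times> (int \<times> int) \<times> (int \<times> int)"
  assume np: "\<not> is_Kmono3 p" and q: "q \<in> Z4sq \<times> Z4sq \<times> Z4sq"
  have m: "fst q \<in> Z4sq" "fst (snd q) \<in> Z4sq" "snd (snd q) \<in> Z4sq" using q by auto
  have "p \<noteq> ((fst q, {}), (fst (snd q), {}), (snd (snd q), {}))"
    using np m unfolding is_Kmono3_def by blast
  then show "\<phi> (fst q) (fst (snd q)) (snd (snd q)) * bvec3 ((fst q, {}), (fst (snd q), {}), (snd (snd q), {})) p = 0"
    by (simp add: bvec3_def)
qed

lemma Ktens3_eqI: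
  assumes "\<And>x y z. x \<in> Z4sq \<Longrightarrow> y \<in> Z4sq \<Longrightarrow> z \<in> Z4sq \<Longrightarrow> G ((x, {}), (y, {}), (z, {})) = \<phi> x y z"
    and "\<And>p. \<not> is_Kmono3 p \<Longrightarrow> G p = 0"
  shows "G = Ktens3 \<phi>"
proof
  fix p
  show "G p = Ktens3 \<phi> p"
  proof (cases "is_Kmono3 p")
    case True
    then obtain x y z where "x \<in> Z4sq" "y \<in> Z4sq" "z \<in> Z4sq" "p = ((x, {}), (y, {}), (z, {}))"
      unfolding is_Kmono3_def by blast
    then show ?thesis using assms(1) Ktens3_at by simp
  next
    case False
    then show ?thesis using assms(2) Ktens3_off by simp
  qed
qed

lemma Ktens3_cong: "(\<And>x y z. x \<in> Z4sq \<Longrightarrow> y \<in> Z4sq \<Longrightarrow> z \<in> Z4sq \<Longrightarrow> \<phi> x y z = \<psi> x y z) \<Longrightarrow> Ktens3 \<phi> = Ktens3 \<psi>"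
  unfolding Ktens3_def by (intro ext sum.cong) auto

definition Kconv3 ::
    "(int \<times> int \<Rightarrow> int \<times> int \<Rightarrow> int \<times> int \<Rightarrow> complex) \<Rightarrow> (int \<times> int \<Rightarrow> int \<times> int \<Rightarrow> int \<times> int \<Rightarrow> complex)
      \<Rightarrow> int \<times> int \<Rightarrow> int \<times> int \<Rightarrow> int \<times> int \<Rightarrow> complex" where
  "Kconv3 \<phi> \<psi> x y z = (\<Sum>q\<in>Z4sq \<times> Z4sq \<times> Z4sq. \<phi> (fst q) (fst (snd q)) (snd (snd q)) *
      \<psi> (md (vsub x (fst q))) (md (vsub y (fst (snd q)))) (md (vsub z (snd (snd q)))))"

lemma Ktens3_mult:
  "mult3 t d u (Ktens3 \<phi>) (Ktens3 \<psi>) = Ktens3 (Kconv3 \<phi> \<psi>)"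
proof -
  let ?k = "\<lambda>q::(int \<times> int) \<times> (int \<times> int) \<times> (int \<times> int). ((fst q, {}::nat set), (fst (snd q), {}::nat set), (snd (snd q), {}::nat set))"
  have b: "?k ` (Z4sq \<times> Z4sq \<times> Z4sq) \<subseteq> basis t \<times> basis t \<times> basis t" by auto
  have "mult3 t d u (Ktens3 \<phi>) (Ktens3 \<psi>) = (\<lambda>p. \<Sum>q\<in>Z4sq \<times> Z4sq \<times> Z4sq. \<Sum>q'\<in>Z4sq \<times> Z4sq \<times> Z4sq.
     \<phi> (fst q) (fst (snd q)) (snd (snd q)) * \<psi> (fst q') (fst (snd q')) (snd (snd q')) * mcoef3 d u (?k q) (?k q') * bvec3 (mres3 (?k q) (?k q')) p)"
    unfolding Ktens3_def by (subst mult3_sparse[OF _ _ b b]) auto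
  also have "\<dots> = (\<lambda>p. \<Sum>q\<in>Z4sq \<times> Z4sq \<times> Z4sq. \<phi> (fst q) (fst (snd q)) (snd (snd q)) * (\<Sum>q'\<in>Z4sq \<times> Z4sq \<times> Z4sq.
     \<psi> (fst q') (fst (snd q')) (snd (snd q')) * bvec3 ((md (vadd (fst q) (fst q')), {}), (md (vadd (fst (snd q)) (fst (snd q'))), {}),
        (md (vadd (snd (snd q)) (snd (snd q'))), {})) p))"
    by (rule ext, rule sum.cong[OF refl]) (simp add: sum_distrib_left mcoef3_def mres3_def mult.assoc)
  also have "\<dots> = (\<lambda>p. \<Sum>q\<in>Z4sq \<times> Z4sq \<times> Z4sq. \<phi> (fst q) (fst (snd q)) (snd (snd q)) * (\<Sum>r\<in>Z4sq \<times> Z4sq \<times> Z4sq.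
     \<psi> (md (vsub (fst r) (fst q))) (md (vsub (fst (snd r)) (fst (snd q)))) (md (vsub (snd (snd r)) (snd (snd q))))
       * bvec3 ((fst r, {}), (fst (snd r), {}), (snd (snd r), {})) p))"
  proof (rule ext, rule sum.cong[OF refl])
    fix p and q :: "(int \<times> int) \<times> (int \<times> int) \<times> (int \<times> int)"
    obtain a b c where q: "q = (a, b, c)" by (cases q)
    have "(\<Sum>r\<in>Z4sq \<times> Z4sq \<times> Z4sq. \<psi> (md (vsub (fst r) a)) (md (vsub (fst (snd r)) b)) (md (vsub (snd (snd r)) c))
          * bvec3 ((fst r, {}), (fst (snd r), {}), (snd (snd r), {})) p)
       = (\<Sum>r1\<in>Z4sq. \<Sum>r2\<in>Z4sq. \<Sum>r3\<in>Z4sq. \<psi> (md (vsub r1 a)) (md (vsub r2 b)) (md (vsub r3 c))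
          * bvec3 ((r1, {}), (r2, {}), (r3, {})) p)"
      by (simp add: sum_Z4sq3)
    also have "\<dots> = (\<Sum>r1\<in>Z4sq. \<Sum>r2\<in>Z4sq. \<Sum>r3\<in>Z4sq. \<psi> (md (vsub (md (vadd a r1)) a)) (md (vsub (md (vadd b r2)) b))
          (md (vsub (md (vadd c r3)) c)) * bvec3 ((md (vadd a r1), {}), (md (vadd b r2), {}), (md (vadd c r3), {})) p)"
      by (subst sum_transl_left[of _ a], rule sum.cong[OF refl], subst sum_transl_left[of _ b], rule sum.cong[OF refl],
          subst sum_transl_left[of _ c], rule refl)
    also have "\<dots> = (\<Sum>r1\<in>Z4sq. \<Sum>r2\<in>Z4sq. \<Sum>r3\<in>Z4sq. \<psi> r1 r2 r3 * bvec3 ((md (vadd a r1), {}), (md (vadd b r2), {}), (md (vadd c r3), {})) p)"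
      by (intro sum.cong refl) (simp add: md_vsub_vadd)
    finally show "\<phi> (fst q) (fst (snd q)) (snd (snd q)) * (\<Sum>q'\<in>Z4sq \<times> Z4sq \<times> Z4sq.
     \<psi> (fst q') (fst (snd q')) (snd (snd q')) * bvec3 ((md (vadd (fst q) (fst q')), {}), (md (vadd (fst (snd q)) (fst (snd q'))), {}),
        (md (vadd (snd (snd q)) (snd (snd q'))), {})) p)
      = \<phi> (fst q) (fst (snd q)) (snd (snd q)) * (\<Sum>r\<in>Z4sq \<times> Z4sq \<times> Z4sq.
     \<psi> (md (vsub (fst r) (fst q))) (md (vsub (fst (snd r)) (fst (snd q)))) (md (vsub (snd (snd r)) (snd (snd q))))
       * bvec3 ((fst r, {}), (fst (snd r), {}), (snd (snd r), {})) p)"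
      by (simp add: q sum_Z4sq3)
  qed
  also have "\<dots> = Ktens3 (Kconv3 \<phi> \<psi>)"
    unfolding Ktens3_def Kconv3_def
  proof (rule ext)
    fix p
    let ?P = "\<lambda>q. \<phi> (fst q) (fst (snd q)) (snd (snd q))"
    let ?Q = "\<lambda>q r. \<psi> (md (vsub (fst r) (fst q))) (md (vsub (fst (snd r)) (fst (snd q)))) (md (vsub (snd (snd r)) (snd (snd q))))"
    let ?b = "\<lambda>r. bvec3 ((fst r, {}), (fst (snd r), {}), (snd (snd r), {})) p"
    let ?B = "Z4sq \<times> Z4sq \<times> Z4sq"
    have "(\<Sum>q\<in>?B. ?P q * (\<Sum>r\<in>?B. ?Q q r * ?b r)) = (\<Sum>q\<in>?B. \<Sum>r\<in>?B. ?P q * (?Q q r * ?b r))"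
      by (simp add: sum_distrib_left)
    also have "\<dots> = (\<Sum>r\<in>?B. \<Sum>q\<in>?B. ?P q * (?Q q r * ?b r))"
      by (rule sum.swap)
    also have "\<dots> = (\<Sum>r\<in>?B. (\<Sum>q\<in>?B. ?P q * ?Q q r) * ?b r)"
      by (simp add: sum_distrib_right mult.assoc)
    finally show "(\<Sum>q\<in>?B. ?P q * (\<Sum>r\<in>?B. ?Q q r * ?b r)) = (\<Sum>r\<in>?B. (\<Sum>q\<in>?B. ?P q * ?Q q r) * ?b r)" .
  qed
  finally show ?thesis .
qed

lemma Delta_id_Ktens: "Delta_id t d u (Ktens \<phi>) = Ktens3 (\<lambda>x y z. if x = y then \<phi> x z else 0)"
proof (rule Ktens3_eqI)
  fix x y z assume x: "x \<in> Z4sq" and y: "y \<in> Z4sq" and z: "z \<in> Z4sq"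
  have "Delta_id t d u (Ktens \<phi>) ((x, {}), (y, {}), (z, {})) = (\<Sum>a\<in>basis t. Ktens \<phi> (a, (z, {})) * Deltab t d u a ((x, {}), (y, {})))"
    by (simp add: Delta_id_def)
  also have "\<dots> = Ktens \<phi> ((x, {}), (z, {})) * Deltab t d u (x, {}) ((x, {}), (y, {}))"
  proof (rule sum_single)
    fix a assume a: "a \<in> basis t" "a \<noteq> (x, {})"
    show "Ktens \<phi> (a, (z, {})) * Deltab t d u a ((x, {}), (y, {})) = 0"
    proof (cases "Ktens \<phi> (a, (z, {})) = 0")
      case False
      then obtain a1 where a1: "a1 \<in> Z4sq" "a = (a1, {})" using Ktens_nonzero_imp by blast
      then have "a1 \<noteq> x" using a by auto
      then show ?thesis using a1 by (simp add: Deltab_K bvec2_def)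
    qed simp
  qed (use x in auto)
  also have "\<dots> = (if x = y then \<phi> x z else 0)"
    using x y z by (simp add: Ktens_at Deltab_K bvec2_def)
  finally show "Delta_id t d u (Ktens \<phi>) ((x, {}), (y, {}), (z, {})) = (if x = y then \<phi> x z else 0)" .
next
  fix p :: "idx \<times> idx \<times> idx" assume np: "\<not> is_Kmono3 p"
  obtain x y z where p: "p = (x, y, z)" by (cases p)
  have "Ktens \<phi> (a, z) * Deltab t d u a (x, y) = 0" if a: "a \<in> basis t" for a
  proof (cases "Ktens \<phi> (a, z) = 0")
    case False
    then obtain a1 z1 where a1: "a1 \<in> Z4sq" "z1 \<in> Z4sq" "a = (a1, {})" "z = (z1, {})" using Ktens_nonzero_imp by blast
    have "(x, y) \<noteq> ((a1, {}), (a1, {}))"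
    proof
      assume "(x, y) = ((a1, {}), (a1, {}))"
      then have "is_Kmono3 p" using a1 unfolding p is_Kmono3_def by blast
      then show False using np by simp
    qed
    then show ?thesis using a1 by (auto simp: Deltab_K bvec2_def)
  qed simp
  then show "Delta_id t d u (Ktens \<phi>) p = 0" unfolding Delta_id_def p by (simp, intro sum.neutral ballI) simp
qed

lemma id_Delta_Ktens: "id_Delta t d u (Ktens \<phi>) = Ktens3 (\<lambda>x y z. if y = z then \<phi> x y else 0)"
proof (rule Ktens3_eqI)
  fix x y z assume x: "x \<in> Z4sq" and y: "y \<in> Z4sq" and z: "z \<in> Z4sq"
  have "id_Delta t d u (Ktens \<phi>) ((x, {}), (y, {}), (z, {})) = (\<Sum>c\<in>basis t. Ktens \<phi> ((x, {}), c) * Deltab t d u c ((y, {}), (z, {})))"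
    by (simp add: id_Delta_def)
  also have "\<dots> = Ktens \<phi> ((x, {}), (y, {})) * Deltab t d u (y, {}) ((y, {}), (z, {}))"
  proof (rule sum_single)
    fix c assume c: "c \<in> basis t" "c \<noteq> (y, {})"
    show "Ktens \<phi> ((x, {}), c) * Deltab t d u c ((y, {}), (z, {})) = 0"
    proof (cases "Ktens \<phi> ((x, {}), c) = 0")
      case False
      then obtain c1 where c1: "c1 \<in> Z4sq" "c = (c1, {})" using Ktens_nonzero_imp by blast
      then have "c1 \<noteq> y" using c by auto
      then show ?thesis using c1 by (simp add: Deltab_K bvec2_def)
    qed simp
  qed (use y in auto)
  also have "\<dots> = (if y = z then \<phi> x y else 0)"
    using x y z by (simp add: Ktens_at Deltab_K bvec2_def)
  finally show "id_Delta t d u (Ktens \<phi>) ((x, {}), (y, {}), (z, {})) = (if y = z then \<phi> x y else 0)" .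
next
  fix p :: "idx \<times> idx \<times> idx" assume np: "\<not> is_Kmono3 p"
  obtain x y z where p: "p = (x, y, z)" by (cases p)
  have "Ktens \<phi> (x, c) * Deltab t d u c (y, z) = 0" if c: "c \<in> basis t" for c
  proof (cases "Ktens \<phi> (x, c) = 0")
    case False
    then obtain x1 c1 where c1: "x1 \<in> Z4sq" "c1 \<in> Z4sq" "x = (x1, {})" "c = (c1, {})" using Ktens_nonzero_imp by blast
    have "(y, z) \<noteq> ((c1, {}), (c1, {}))"
    proof
      assume "(y, z) = ((c1, {}), (c1, {}))"
      then have "is_Kmono3 p" using c1 unfolding p is_Kmono3_def by blast
      then show False using np by simp
    qed
    then show ?thesis using c1 by (auto simp: Deltab_K bvec2_def)
  qed simp
  then show "id_Delta t d u (Ktens \<phi>) p = 0" unfolding id_Delta_def p by (simp, intro sum.neutral ballI) simp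
qed

lemma leg13_Ktens: "leg13 (Ktens \<phi>) = Ktens3 (\<lambda>x y z. if y = (0,0) then \<phi> x z else 0)"
proof (rule Ktens3_eqI)
  fix x y z assume "x \<in> Z4sq" "y \<in> Z4sq" "z \<in> Z4sq"
  then show "leg13 (Ktens \<phi>) ((x, {}), (y, {}), (z, {})) = (if y = (0,0) then \<phi> x z else 0)"
    by (simp add: leg13_def Ktens_at one_at)
next
  fix p :: "idx \<times> idx \<times> idx" assume np: "\<not> is_Kmono3 p"
  obtain x y z where p: "p = (x, y, z)" by (cases p)
  show "leg13 (Ktens \<phi>) p = 0"
  proof (rule ccontr)
    assume "leg13 (Ktens \<phi>) p \<noteq> 0"
    then have k: "Ktens \<phi> (x, z) \<noteq> 0" and o: "one y \<noteq> 0" by (auto simp: leg13_def p)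
    obtain a1 b1 where ab: "a1 \<in> Z4sq" "b1 \<in> Z4sq" "x = (a1, {})" "z = (b1, {})" using Ktens_nonzero_imp[OF k] by blast
    have "y = ((0,0), {})" using one_nonzero_imp[OF o] .
    then have "is_Kmono3 p" using ab zero_in_Z4sq unfolding p is_Kmono3_def by blast
    then show False using np by simp
  qed
qed

lemma leg23_Ktens: "leg23 (Ktens \<phi>) = Ktens3 (\<lambda>x y z. if x = (0,0) then \<phi> y z else 0)"
proof (rule Ktens3_eqI)
  fix x y z assume "x \<in> Z4sq" "y \<in> Z4sq" "z \<in> Z4sq"
  then show "leg23 (Ktens \<phi>) ((x, {}), (y, {}), (z, {})) = (if x = (0,0) then \<phi> y z else 0)"
    by (simp add: leg23_def Ktens_at one_at)
next
  fix p :: "idx \<times> idx \<times> idx" assume np: "\<not> is_Kmono3 p"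
  obtain x y z where p: "p = (x, y, z)" by (cases p)
  show "leg23 (Ktens \<phi>) p = 0"
  proof (rule ccontr)
    assume "leg23 (Ktens \<phi>) p \<noteq> 0"
    then have k: "Ktens \<phi> (y, z) \<noteq> 0" and o: "one x \<noteq> 0" by (auto simp: leg23_def p)
    obtain a1 b1 where ab: "a1 \<in> Z4sq" "b1 \<in> Z4sq" "y = (a1, {})" "z = (b1, {})" using Ktens_nonzero_imp[OF k] by blast
    have "x = ((0,0), {})" using one_nonzero_imp[OF o] .
    then have "is_Kmono3 p" using ab zero_in_Z4sq unfolding p is_Kmono3_def by blast
    then show False using np by simp
  qed
qed

lemma leg12_Ktens: "leg12 (Ktens \<phi>) = Ktens3 (\<lambda>x y z. if z = (0,0) then \<phi> x y else 0)"
proof (rule Ktens3_eqI)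
  fix x y z assume "x \<in> Z4sq" "y \<in> Z4sq" "z \<in> Z4sq"
  then show "leg12 (Ktens \<phi>) ((x, {}), (y, {}), (z, {})) = (if z = (0,0) then \<phi> x y else 0)"
    by (simp add: leg12_def Ktens_at one_at)
next
  fix p :: "idx \<times> idx \<times> idx" assume np: "\<not> is_Kmono3 p"
  obtain x y z where p: "p = (x, y, z)" by (cases p)
  show "leg12 (Ktens \<phi>) p = 0"
  proof (rule ccontr)
    assume "leg12 (Ktens \<phi>) p \<noteq> 0"
    then have k: "Ktens \<phi> (x, y) \<noteq> 0" and o: "one z \<noteq> 0" by (auto simp: leg12_def p)
    obtain a1 b1 where ab: "a1 \<in> Z4sq" "b1 \<in> Z4sq" "x = (a1, {})" "y = (b1, {})" using Ktens_nonzero_imp[OF k] by blast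
    have "z = ((0,0), {})" using one_nonzero_imp[OF o] .
    then have "is_Kmono3 p" using ab zero_in_Z4sq unfolding p is_Kmono3_def by blast
    then show False using np by simp
  qed
qed

section \<open>R_z is a triangular R-matrix\<close>

lemma Rz_eq_Ktens: "Rz = Ktens Rcoef"
proof
  fix p :: "idx \<times> idx"
  obtain x y where p: "p = (x, y)" by (cases p)
  have Rz: "Rz p = (1/16) * (\<Sum>v\<in>Z4sq. \<Sum>w\<in>Z4sq. ip (- dot v w) * Kpow w x * Kpow (zmul v) y)"
    by (simp add: Rz_def p Z4sq_def zmul_def)
  show "Rz p = Ktens Rcoef p"
  proof (cases "\<exists>a b. a \<in> Z4sq \<and> b \<in> Z4sq \<and> p = ((a, {}), (b, {}))")
    case True
    then obtain a b where ab: "a \<in> Z4sq" "b \<in> Z4sq" "x = (a, {})" "y = (b, {})" using p by auto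
    have inner: "(\<Sum>w\<in>Z4sq. ip (- dot v w) * Kpow w x * Kpow (zmul v) y) = ip (- dot v a) * Kpow (zmul v) y" for v
      by (subst sum_single[of _ a]) (auto simp: ab Kpow_at)
    have vb: "md (zinv b) \<in> Z4sq" by simp
    have "(\<Sum>v\<in>Z4sq. \<Sum>w\<in>Z4sq. ip (- dot v w) * Kpow w x * Kpow (zmul v) y) = (\<Sum>v\<in>Z4sq. ip (- dot v a) * Kpow (zmul v) y)"
      by (rule sum.cong[OF refl], rule inner)
    also have "(\<Sum>v\<in>Z4sq. ip (- dot v a) * Kpow (zmul v) y) = ip (- dot (md (zinv b)) a) * Kpow (zmul (md (zinv b))) y"
    proof (rule sum_single[OF _ vb])
      fix v assume v: "v \<in> Z4sq" "v \<noteq> md (zinv b)"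
      have "md (zmul v) \<noteq> b" using zinv_zmul[OF v(1)] v(2) by auto
      then show "ip (- dot v a) * Kpow (zmul v) y = 0" by (simp add: Kpow_def bvec_def ab)
    qed simp
    also have "\<dots> = ip (- rform a b)"
      using zmul_zinv[OF ab(2)] by (simp add: Kpow_def bvec_def ab ip_dot_zinv)
    finally show ?thesis using Rz ab Ktens_at[OF ab(1,2)] by (simp add: Rcoef_def p)
  next
    case False
    have z: "ip (- dot v w) * Kpow w x * Kpow (zmul v) y = 0" if "v \<in> Z4sq" "w \<in> Z4sq" for v w
    proof -
      have "\<not> (x = (md w, {}) \<and> y = (md (zmul v), {}))" using False p md_in_Z4sq by blast
      then show ?thesis by (auto simp: Kpow_def bvec_def)
    qed
    have "(\<Sum>v\<in>Z4sq. \<Sum>w\<in>Z4sq. ip (- dot v w) * Kpow w x * Kpow (zmul v) y) = 0"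
      by (intro sum.neutral ballI) (simp add: z)
    then have "Rz p = 0" using Rz by simp
    then show ?thesis using Ktens_off[OF False] by simp
  qed
qed

lemma Rz_in_carrier2: "Rz \<in> carrier2 t"
  unfolding carrier2_def Rz_eq_Ktens
proof (intro CollectI allI impI)
  fix p assume "p \<notin> basis t \<times> basis t"
  then have "\<not> (\<exists>x y. x \<in> Z4sq \<and> y \<in> Z4sq \<and> p = ((x, {}), (y, {})))" by auto
  then show "Ktens Rcoef p = 0" by (rule Ktens_off)
qed

lemma sum_Rcoef_flip_conv:
  assumes x: "x \<in> Z4sq" and y: "y \<in> Z4sq"
  shows "(\<Sum>q\<in>Z4sq \<times> Z4sq. ip (- rform (snd q) (fst q)) * ip (- rform (md (vsub x (fst q))) (md (vsub y (snd q)))))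
      = (if x = (0,0) \<and> y = (0,0) then 256 else 0)"
proof -
  have "(\<Sum>q\<in>Z4sq \<times> Z4sq. ip (- rform (snd q) (fst q)) * ip (- rform (md (vsub x (fst q))) (md (vsub y (snd q)))))
      = (\<Sum>q\<in>Z4sq \<times> Z4sq. ip (- rform x y) * (ip (rform (fst q) y) * ip (rform x (snd q))))"
  proof (rule sum.cong[OF refl])
    fix q :: "(int \<times> int) \<times> (int \<times> int)"
    show "ip (- rform (snd q) (fst q)) * ip (- rform (md (vsub x (fst q))) (md (vsub y (snd q))))
        = ip (- rform x y) * (ip (rform (fst q) y) * ip (rform x (snd q)))"
      unfolding ip_add using ip_cong[OF rform_vsub_cong[of "snd q" "fst q" x y]] by (simp add: algebra_simps)
  qed
  also have "\<dots> = ip (- rform x y) * ((\<Sum>a\<in>Z4sq. ip (rform a y)) * (\<Sum>b\<in>Z4sq. ip (rform x b)))"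
    unfolding sum_distrib_left[symmetric] using sum_Z4sq2_product[of "\<lambda>a. ip (rform a y)" "\<lambda>b. ip (rform x b)"] by simp
  also have "\<dots> = (if x = (0,0) \<and> y = (0,0) then 256 else 0)"
    unfolding sum_ip_rform_left sum_ip_rform_right using md_id[OF x] md_id[OF y] by (auto simp: rform_def)
  finally show ?thesis .
qed

lemma sum_Rcoef_conv_flip:
  assumes x: "x \<in> Z4sq" and y: "y \<in> Z4sq"
  shows "(\<Sum>q\<in>Z4sq \<times> Z4sq. ip (- rform (fst q) (snd q)) * ip (- rform (md (vsub y (snd q))) (md (vsub x (fst q)))))
      = (if x = (0,0) \<and> y = (0,0) then 256 else 0)"
proof -
  have "(\<Sum>q\<in>Z4sq \<times> Z4sq. ip (- rform (fst q) (snd q)) * ip (- rform (md (vsub y (snd q))) (md (vsub x (fst q)))))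
     = (\<Sum>q\<in>Z4sq \<times> Z4sq. ip (- rform (snd q) (fst q)) * ip (- rform (md (vsub y (fst q))) (md (vsub x (snd q)))))"
    by (rule sum.reindex_bij_witness[where i = prod.swap and j = prod.swap]) auto
  also have "\<dots> = (if y = (0,0) \<and> x = (0,0) then 256 else 0)" by (rule sum_Rcoef_flip_conv[OF y x])
  finally show ?thesis by auto
qed

lemma Rz_triangular: "mult2 t d u (flip Rz) Rz = one2"
proof -
  have "mult2 t d u (flip Rz) Rz = Ktens (Kconv (\<lambda>x y. Rcoef y x) Rcoef)"
    unfolding Rz_eq_Ktens Ktens_flip Ktens_mult ..
  also have "\<dots> = one2"
    unfolding one2_eq_Ktens
  proof (rule Ktens_eqI)
    fix x y assume x: "x \<in> Z4sq" and y: "y \<in> Z4sq"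
    have "Kconv (\<lambda>x y. Rcoef y x) Rcoef x y = (1/256) * (\<Sum>q\<in>Z4sq \<times> Z4sq. ip (- rform (snd q) (fst q)) * ip (- rform (md (vsub x (fst q))) (md (vsub y (snd q)))))"
      unfolding Kconv_def Rcoef_def by (simp add: sum_distrib_left)
    also have "\<dots> = (1/256) * (if x = (0,0) \<and> y = (0,0) then 256 else 0)"
      using sum_Rcoef_flip_conv[OF x y] by simp
    finally show "Kconv (\<lambda>x y. Rcoef y x) Rcoef x y = (if x = (0,0) \<and> y = (0,0) then 1 else 0)"
      by (cases "x = (0,0) \<and> y = (0,0)") simp_all
  qed
  finally show ?thesis .
qed

lemma Rz_mult_flip_Rz: "mult2 t d u Rz (flip Rz) = one2"
proof -
  have "mult2 t d u Rz (flip Rz) = Ktens (Kconv Rcoef (\<lambda>x y. Rcoef y x))"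
    unfolding Rz_eq_Ktens Ktens_flip Ktens_mult ..
  also have "\<dots> = one2"
    unfolding one2_eq_Ktens
  proof (rule Ktens_eqI)
    fix x y assume x: "x \<in> Z4sq" and y: "y \<in> Z4sq"
    have "Kconv Rcoef (\<lambda>x y. Rcoef y x) x y = (1/256) * (\<Sum>q\<in>Z4sq \<times> Z4sq. ip (- rform (fst q) (snd q)) * ip (- rform (md (vsub y (snd q))) (md (vsub x (fst q)))))"
      unfolding Kconv_def Rcoef_def by (simp add: sum_distrib_left)
    also have "\<dots> = (1/256) * (if x = (0,0) \<and> y = (0,0) then 256 else 0)"
      using sum_Rcoef_conv_flip[OF x y] by simp
    finally show "Kconv Rcoef (\<lambda>x y. Rcoef y x) x y = (if x = (0,0) \<and> y = (0,0) then 1 else 0)"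
      by (cases "x = (0,0) \<and> y = (0,0)") simp_all
  qed
  finally show ?thesis .
qed

lemma sum_Rcoef_hexagon_left:
  assumes x: "x \<in> Z4sq" and y: "y \<in> Z4sq"
  shows "(\<Sum>q\<in>Z4sq. Rcoef x q * Rcoef y (md (vsub z q))) = (if x = y then Rcoef x z else 0)"
proof -
  have "(\<Sum>q\<in>Z4sq. Rcoef x q * Rcoef y (md (vsub z q))) = (\<Sum>q\<in>Z4sq. (1/256) * ip (- rform y z) * ip (rform (vsub y x) q))"
  proof (rule sum.cong[OF refl])
    fix q
    have "[- rform x q - rform y (md (vsub z q)) = - rform x q - rform y (vsub z q)] (mod 4)"
      by (intro cong_diff cong_refl rform_md_right)
    moreover have "- rform x q - rform y (vsub z q) = - rform y z + rform (vsub y x) q"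
      by (simp add: rform_vsub_left rform_vsub_right)
    ultimately have "ip (- rform x q - rform y (md (vsub z q))) = ip (- rform y z + rform (vsub y x) q)"
      by (simp add: ip_cong)
    then show "Rcoef x q * Rcoef y (md (vsub z q)) = (1/256) * ip (- rform y z) * ip (rform (vsub y x) q)"
      by (simp add: Rcoef_def ip_add)
  qed
  also have "\<dots> = (1/256) * ip (- rform y z) * (\<Sum>q\<in>Z4sq. ip (rform (vsub y x) q))"
    by (simp add: sum_distrib_left)
  also have "\<dots> = (if x = y then Rcoef x z else 0)"
    unfolding sum_ip_rform_right using md_vsub_eq_0_iff[OF y x] by (auto simp: Rcoef_def)
  finally show ?thesis .
qed

lemma sum_Rcoef_hexagon_right:
  assumes x: "x \<in> Z4sq" and y: "y \<in> Z4sq" and z: "z \<in> Z4sq"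
  shows "(\<Sum>q\<in>Z4sq. Rcoef q z * Rcoef (md (vsub x q)) y) = (if y = z then Rcoef x y else 0)"
proof -
  have "(\<Sum>q\<in>Z4sq. Rcoef q z * Rcoef (md (vsub x q)) y) = (\<Sum>q\<in>Z4sq. (1/256) * ip (- rform x y) * ip (rform q (vsub y z)))"
  proof (rule sum.cong[OF refl])
    fix q
    have "[- rform q z - rform (md (vsub x q)) y = - rform q z - rform (vsub x q) y] (mod 4)"
      by (intro cong_diff cong_refl rform_md_left)
    moreover have "- rform q z - rform (vsub x q) y = - rform x y + rform q (vsub y z)"
      by (simp add: rform_vsub_left rform_vsub_right)
    ultimately have "ip (- rform q z - rform (md (vsub x q)) y) = ip (- rform x y + rform q (vsub y z))"
      by (simp add: ip_cong)
    then show "Rcoef q z * Rcoef (md (vsub x q)) y = (1/256) * ip (- rform x y) * ip (rform q (vsub y z))"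
      by (simp add: Rcoef_def ip_add)
  qed
  also have "\<dots> = (1/256) * ip (- rform x y) * (\<Sum>q\<in>Z4sq. ip (rform q (vsub y z)))"
    by (simp add: sum_distrib_left)
  also have "\<dots> = (if y = z then Rcoef x y else 0)"
    unfolding sum_ip_rform_left using md_vsub_eq_0_iff[OF y z] by (auto simp: Rcoef_def)
  finally show ?thesis .
qed

lemma Kconv3_hexagon_left:
  assumes x: "x \<in> Z4sq" and y: "y \<in> Z4sq" and z: "z \<in> Z4sq"
  shows "Kconv3 (\<lambda>x y z. if y = (0, 0) then Rcoef x z else 0) (\<lambda>x y z. if x = (0, 0) then Rcoef y z else 0) x y z
      = (if x = y then Rcoef x z else 0)"
proof -
  let ?F = "\<lambda>q1 q2 q3. (if q2 = (0,0) then Rcoef q1 q3 else 0) *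
      (if md (vsub x q1) = (0,0) then Rcoef (md (vsub y q2)) (md (vsub z q3)) else 0)"
  have "Kconv3 (\<lambda>x y z. if y = (0, 0) then Rcoef x z else 0) (\<lambda>x y z. if x = (0, 0) then Rcoef y z else 0) x y z
      = (\<Sum>q1\<in>Z4sq. \<Sum>q2\<in>Z4sq. \<Sum>q3\<in>Z4sq. ?F q1 q2 q3)"
    by (simp add: Kconv3_def sum_Z4sq3 cong: if_cong)
  also have "\<dots> = (\<Sum>q1\<in>Z4sq. \<Sum>q3\<in>Z4sq. ?F q1 (0,0) q3)"
    by (rule sum.cong[OF refl], rule sum_single) auto
  also have "\<dots> = (\<Sum>q3\<in>Z4sq. ?F x (0,0) q3)"
  proof (rule sum_single[OF _ x])
    fix q1 assume "q1 \<in> Z4sq" "q1 \<noteq> x"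
    then have "md (vsub x q1) \<noteq> (0,0)" using md_vsub_eq_0_iff[OF x] by auto
    then show "(\<Sum>q3\<in>Z4sq. ?F q1 (0,0) q3) = 0" by simp
  qed simp
  also have "\<dots> = (\<Sum>q3\<in>Z4sq. Rcoef x q3 * Rcoef y (md (vsub z q3)))"
    using md_vsub_eq_0_iff[OF x x] y by simp
  also have "\<dots> = (if x = y then Rcoef x z else 0)" by (rule sum_Rcoef_hexagon_left[OF x y])
  finally show ?thesis .
qed

lemma Kconv3_hexagon_right:
  assumes x: "x \<in> Z4sq" and y: "y \<in> Z4sq" and z: "z \<in> Z4sq"
  shows "Kconv3 (\<lambda>x y z. if y = (0, 0) then Rcoef x z else 0) (\<lambda>x y z. if z = (0, 0) then Rcoef x y else 0) x y z
      = (if y = z then Rcoef x y else 0)"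
proof -
  let ?F = "\<lambda>q1 q2 q3. (if q2 = (0,0) then Rcoef q1 q3 else 0) *
      (if md (vsub z q3) = (0,0) then Rcoef (md (vsub x q1)) (md (vsub y q2)) else 0)"
  have "Kconv3 (\<lambda>x y z. if y = (0, 0) then Rcoef x z else 0) (\<lambda>x y z. if z = (0, 0) then Rcoef x y else 0) x y z
      = (\<Sum>q1\<in>Z4sq. \<Sum>q2\<in>Z4sq. \<Sum>q3\<in>Z4sq. ?F q1 q2 q3)"
    by (simp add: Kconv3_def sum_Z4sq3 cong: if_cong)
  also have "\<dots> = (\<Sum>q1\<in>Z4sq. \<Sum>q3\<in>Z4sq. ?F q1 (0,0) q3)"
    by (rule sum.cong[OF refl], rule sum_single) auto
  also have "\<dots> = (\<Sum>q1\<in>Z4sq. ?F q1 (0,0) z)"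
  proof (rule sum.cong[OF refl], rule sum_single[OF _ z])
    fix q1 q3 assume "q3 \<in> Z4sq" "q3 \<noteq> z"
    then have "md (vsub z q3) \<noteq> (0,0)" using md_vsub_eq_0_iff[OF z] by auto
    then show "?F q1 (0,0) q3 = 0" by simp
  qed simp
  also have "\<dots> = (\<Sum>q1\<in>Z4sq. Rcoef q1 z * Rcoef (md (vsub x q1)) y)"
    using md_vsub_eq_0_iff[OF z z] y by simp
  also have "\<dots> = (if y = z then Rcoef x y else 0)" by (rule sum_Rcoef_hexagon_right[OF x y z])
  finally show ?thesis .
qed

lemma Rz_hexagon_left: "Delta_id t d u Rz = mult3 t d u (leg13 Rz) (leg23 Rz)"
  unfolding Rz_eq_Ktens Delta_id_Ktens leg13_Ktens leg23_Ktens Ktens3_mult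
  by (rule Ktens3_cong) (simp add: Kconv3_hexagon_left)

lemma Rz_hexagon_right: "id_Delta t d u Rz = mult3 t d u (leg13 Rz) (leg12 Rz)"
  unfolding Rz_eq_Ktens id_Delta_Ktens leg13_Ktens leg12_Ktens Ktens3_mult
  by (rule Ktens3_cong) (simp add: Kconv3_hexagon_right)

(* The only information about N_1 that quasi-cocommutativity of R_z needs. *)
definition rform_adapted :: "vecs \<Rightarrow> vecs \<Rightarrow> nat \<Rightarrow> bool" where
  "rform_adapted d u t \<longleftrightarrow> (\<forall>k<t. \<forall>x. [rform x (u k) = - dot (d k) x] (mod 4) \<and> [rform (u k) x = dot (d k) x] (mod 4))"

lemma reorder_exp_complement_cong:
  assumes G3: "\<And>k j. k \<in> r - S \<Longrightarrow> j \<in> S \<Longrightarrow> [dot (d k) (u j) + dot (d j) (u k) = 0] (mod 4)"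
    and S: "S \<subseteq> r" and fr: "finite r"
  shows "[(\<Sum>k\<in>r - S. \<Sum>j\<in>S. dot (d k) (u j)) + reorder_exp d u r (r - S) = reorder_exp d u r S] (mod 4)"
proof -
  let ?e = "\<lambda>k j. dot (d k) (u j)"
  have fS: "finite S" using S fr finite_subset by blast
  have rr: "r - (r - S) = S" using S by auto
  have X: "(\<Sum>k\<in>r - S. \<Sum>j\<in>S. ?e k j) = (\<Sum>k\<in>r - S. \<Sum>j\<in>S. ?e k j)" by (rule refl)
  have E': "reorder_exp d u r (r - S) = (\<Sum>k\<in>r - S. \<Sum>j\<in>S. (if j < k then ?e j k else 0))"
    unfolding reorder_exp_def rr by (rule sum.swap)
  have "(\<Sum>k\<in>r - S. \<Sum>j\<in>S. ?e k j) + reorder_exp d u r (r - S)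
      = (\<Sum>k\<in>r - S. \<Sum>j\<in>S. ?e k j + (if j < k then ?e j k else 0))"
    unfolding E' by (simp add: sum.distrib)
  moreover have "[\<Sum>k\<in>r - S. \<Sum>j\<in>S. ?e k j + (if j < k then ?e j k else 0) = \<Sum>k\<in>r - S. \<Sum>j\<in>S. (if k < j then ?e k j else 0)] (mod 4)"
  proof (intro cong_sum)
    fix k j assume k: "k \<in> r - S" and j: "j \<in> S"
    then have "k \<noteq> j" by auto
    then consider "k < j" | "j < k" by linarith
    then show "[?e k j + (if j < k then ?e j k else 0) = if k < j then ?e k j else 0] (mod 4)"
    proof cases
      case 1 then show ?thesis by simp
    next
      case 2 then show ?thesis using G3[OF k j] by simp
    qed
  qed
  ultimately show ?thesis unfolding reorder_exp_def by simp
qed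

lemma rform_reorder_cong:
  assumes G: "rform_adapted d u t" and r: "r \<subseteq> {0..<t}" and S: "S \<subseteq> r"
  shows "[- rform (md (vadd (usum u S) a)) (md (vadd (vneg (usum u (r - S))) b)) - reorder_exp d u r (r - S) = - reorder_exp d u r S - rform a b - (\<Sum>k\<in>r - S. dot (d k) a) - (\<Sum>k\<in>S. dot (d k) b)] (mod 4)"
proof -
  have fr: "finite r" using r finite_subset by blast
  let ?US = "usum u S" and ?U' = "usum u (r - S)"
  have G1: "[rform x (u k) = - dot (d k) x] (mod 4)" if "k \<in> r" for k x
  proof -
    have "k < t" using that r by auto
    then show ?thesis using G unfolding rform_adapted_def by blast
  qed
  have G2: "[rform (u k) x = dot (d k) x] (mod 4)" if "k \<in> r" for k x
  proof -
    have "k < t" using that r by auto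
    then show ?thesis using G unfolding rform_adapted_def by blast
  qed
  have G3: "[dot (d k) (u j) + dot (d j) (u k) = 0] (mod 4)" if "k \<in> r - S" "j \<in> S" for k j
  proof -
    have "[dot (d k) (u j) + dot (d j) (u k) = rform (u k) (u j) + rform (u j) (u k)] (mod 4)"
      using that S by (intro cong_add cong_sym[OF G2]) auto
    then show ?thesis using rform_antisym_cong cong_trans by blast
  qed
  define X where "X = (\<Sum>k\<in>r - S. \<Sum>j\<in>S. dot (d k) (u j))"
  let ?E = "reorder_exp d u r (r - S)"
  let ?DA = "\<Sum>k\<in>r - S. dot (d k) a" and ?DB = "\<Sum>k\<in>S. dot (d k) b"
  have e3: "[rform ?US b = ?DB] (mod 4)"
    unfolding rform_usum_left using S by (intro cong_sum G2) auto
  have e4: "[rform a ?U' = - ?DA] (mod 4)"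
    unfolding rform_usum_right sum_negf[symmetric] by (intro cong_sum G1) auto
  have e5: "[rform ?US ?U' = - X] (mod 4)"
    unfolding X_def rform_usum_left rform_usum_right sum_negf[symmetric] using S by (intro cong_sum G1) auto
  have e6: "[X + ?E = reorder_exp d u r S] (mod 4)"
    unfolding X_def by (rule reorder_exp_complement_cong[OF G3 S fr])
  have "[- rform (md (vadd ?US a)) (md (vadd (vneg ?U') b)) - ?E
      = - rform (vadd ?US a) (vadd (vneg ?U') b) - ?E] (mod 4)"
    by (intro cong_diff cong_uminus cong_refl rform_md)
  also have "- rform (vadd ?US a) (vadd (vneg ?U') b) - ?E = rform ?US ?U' - rform ?US b + rform a ?U' - rform a b - ?E"
    by (simp add: rform_vadd_left rform_vadd_right rform_vneg_left rform_vneg_right)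
  also have "[\<dots> = - X - ?DB + - ?DA - rform a b - ?E] (mod 4)"
    by (intro cong_diff cong_add cong_refl e3 e4 e5)
  also have "- X - ?DB + - ?DA - rform a b - ?E = - (X + ?E) - rform a b - ?DA - ?DB"
    by (simp add: algebra_simps)
  also have "[- (X + ?E) - rform a b - ?DA - ?DB = - reorder_exp d u r S - rform a b - ?DA - ?DB] (mod 4)"
    by (intro cong_diff cong_uminus cong_refl e6)
  finally show ?thesis .
qed

lemma Rcoef_reorder:
  assumes "rform_adapted d u t" "r \<subseteq> {0..<t}" "S \<subseteq> r"
  shows "Rcoef (md (vadd (usum u S) a)) (md (vadd (vneg (usum u (r - S))) b)) * ip (- reorder_exp d u r (r - S))
    = ip (- reorder_exp d u r S) * Rcoef a b * (ip (- (\<Sum>k\<in>r - S. dot (d k) a)) * ip (- (\<Sum>k\<in>S. dot (d k) b)))"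
proof -
  let ?a' = "md (vadd (usum u S) a)" and ?b' = "md (vadd (vneg (usum u (r - S))) b)"
  let ?DA = "\<Sum>k\<in>r - S. dot (d k) a" and ?DB = "\<Sum>k\<in>S. dot (d k) b"
  have "[- rform ?a' ?b' + - reorder_exp d u r (r - S) = - reorder_exp d u r S - rform a b - ?DA - ?DB] (mod 4)"
    using rform_reorder_cong[OF assms, of a b] by simp
  moreover have "- reorder_exp d u r S - rform a b - ?DA - ?DB = - rform a b + (- reorder_exp d u r S + (- ?DA + - ?DB))"
    by simp
  ultimately have e: "ip (- rform ?a' ?b' + - reorder_exp d u r (r - S))
      = ip (- rform a b + (- reorder_exp d u r S + (- ?DA + - ?DB)))"
    by (metis ip_cong)
  have "ip (- reorder_exp d u r S) * Rcoef a b * (ip (- ?DA) * ip (- ?DB))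
      = Rcoef a b * (ip (- reorder_exp d u r S) * (ip (- ?DA) * ip (- ?DB)))"
    by (simp add: mult_ac)
  also have "\<dots> = Rcoef a b * ip (- reorder_exp d u r S + (- ?DA + - ?DB))"
    by (simp only: ip_add)
  also have "\<dots> = Rcoef ?a' ?b' * ip (- reorder_exp d u r (r - S))"
    unfolding Rcoef_mult_ip e ..
  finally show ?thesis ..
qed

lemma Rz_commutes_Delta_mono:
  assumes G: "rform_adapted d u t" and v: "v \<in> Z4sq" and r: "r \<subseteq> {0..<t}"
  shows "mult2 t d u (flip (Delta_mono d u v r)) Rz = mult2 t d u Rz (Delta_mono d u v r)"
proof -
  have fr: "finite r" using r finite_subset by blast
  have mv: "md v = v" using md_id[OF v] .
  let ?w = "\<lambda>S. md (vadd v (usum u S))"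
  let ?pos = "\<lambda>S. ((md v, S), (?w S, r - S))"
  let ?c = "\<lambda>S. ip (- reorder_exp d u r S)"
  let ?kq = "\<lambda>q::(int \<times> int) \<times> (int \<times> int). ((fst q, {}::nat set), (snd q, {}::nat set))"
  have bpos: "?pos ` Pow r \<subseteq> basis t \<times> basis t" using r by (auto simp: basis_iff)
  have bpos': "(\<lambda>S. prod.swap (?pos S)) ` Pow r \<subseteq> basis t \<times> basis t" using r by (auto simp: basis_iff)
  have bk: "?kq ` (Z4sq \<times> Z4sq) \<subseteq> basis t \<times> basis t" by auto
  have DBs: "Delta_mono d u v r = (\<lambda>p. \<Sum>S\<in>Pow r. ?c S * bvec2 (?pos S) p)" by (simp add: Delta_mono_def)
  have Rs: "Rz = (\<lambda>p. \<Sum>q\<in>Z4sq \<times> Z4sq. Rcoef (fst q) (snd q) * bvec2 (?kq q) p)" by (simp add: Rz_eq_Ktens Ktens_def)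
  have L: "mult2 t d u (flip (Delta_mono d u v r)) Rz = (\<lambda>p. \<Sum>S\<in>Pow r. \<Sum>q\<in>Z4sq \<times> Z4sq.
      ?c S * Rcoef (fst q) (snd q) * mcoef2 d u (prod.swap (?pos S)) (?kq q) * bvec2 (mres2 (prod.swap (?pos S)) (?kq q)) p)"
    unfolding DBs flip_sparse by (subst Rs, subst mult2_sparse[OF _ _ bpos' bk]) (auto simp: fr)
  have R: "mult2 t d u Rz (Delta_mono d u v r) = (\<lambda>p. \<Sum>q\<in>Z4sq \<times> Z4sq. \<Sum>S\<in>Pow r.
      Rcoef (fst q) (snd q) * ?c S * mcoef2 d u (?kq q) (?pos S) * bvec2 (mres2 (?kq q) (?pos S)) p)"
    unfolding DBs by (subst Rs, subst mult2_sparse[OF _ _ bk bpos]) (auto simp: fr)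
  show ?thesis
  proof (unfold L R, rule ext)
    fix p
    let ?LT = "\<lambda>S a b. ?c S * Rcoef a b * mcoef2 d u (prod.swap (?pos S)) ((a, {}), (b, {})) *
       bvec2 (mres2 (prod.swap (?pos S)) ((a, {}), (b, {}))) p"
    let ?RT = "\<lambda>S a b. Rcoef a b * ?c S * mcoef2 d u ((a, {}), (b, {})) (?pos S) * bvec2 (mres2 ((a, {}), (b, {})) (?pos S)) p"
    have "(\<Sum>q\<in>Z4sq \<times> Z4sq. \<Sum>S\<in>Pow r. ?RT S (fst q) (snd q)) = (\<Sum>S\<in>Pow r. \<Sum>q\<in>Z4sq \<times> Z4sq. ?RT S (fst q) (snd q))"
      by (rule sum.swap)
    also have "\<dots> = (\<Sum>S\<in>Pow r. \<Sum>q\<in>Z4sq \<times> Z4sq. ?RT (r - S) (fst q) (snd q))"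
      by (rule sum.reindex_bij_witness[where i = "\<lambda>S. r - S" and j = "\<lambda>S. r - S"]) (auto simp: Diff_Diff_Int Int_absorb1)
    also have "\<dots> = (\<Sum>S\<in>Pow r. \<Sum>a\<in>Z4sq. \<Sum>b\<in>Z4sq. ?RT (r - S) (md (vadd (usum u S) a)) (md (vadd (vneg (usum u (r - S))) b)))"
    proof (rule sum.cong[OF refl])
      fix S assume "S \<in> Pow r"
      have "(\<Sum>q\<in>Z4sq \<times> Z4sq. ?RT (r - S) (fst q) (snd q)) = (\<Sum>a\<in>Z4sq. \<Sum>b\<in>Z4sq. ?RT (r - S) a b)"
        by (simp add: sum_Z4sq2)
      also have "\<dots> = (\<Sum>a\<in>Z4sq. \<Sum>b\<in>Z4sq. ?RT (r - S) (md (vadd (usum u S) a)) b)"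
        by (rule sum_transl_left[of "\<lambda>a. \<Sum>b\<in>Z4sq. ?RT (r - S) a b" "usum u S"])
      also have "\<dots> = (\<Sum>a\<in>Z4sq. \<Sum>b\<in>Z4sq. ?RT (r - S) (md (vadd (usum u S) a)) (md (vadd (vneg (usum u (r - S))) b)))"
        by (rule sum.cong[OF refl], rule sum_transl_left)
      finally show "(\<Sum>q\<in>Z4sq \<times> Z4sq. ?RT (r - S) (fst q) (snd q)) = (\<Sum>a\<in>Z4sq. \<Sum>b\<in>Z4sq. ?RT (r - S) (md (vadd (usum u S) a)) (md (vadd (vneg (usum u (r - S))) b)))" .
    qed
    also have "\<dots> = (\<Sum>S\<in>Pow r. \<Sum>a\<in>Z4sq. \<Sum>b\<in>Z4sq. ?LT S a b)"
    proof (intro sum.cong refl)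
      fix S a b assume S: "S \<in> Pow r" and a: "a \<in> Z4sq" and b: "b \<in> Z4sq"
      have rr: "r - (r - S) = S" using S by auto
      have Sr: "S \<subseteq> r" using S by auto
      let ?a' = "md (vadd (usum u S) a)" and ?b' = "md (vadd (vneg (usum u (r - S))) b)"
      have pos: "mres2 ((?a', {}), (?b', {})) (?pos (r - S)) = mres2 (prod.swap (?pos S)) ((a, {}), (b, {}))"
        unfolding mres2_def mres_pair fst_conv snd_conv mv md_vadd_rotate[of "usum u S" a v] md_vadd_vneg_cancel rr by simp
      have m1: "mcoef2 d u ((?a', {}), (?b', {})) (?pos (r - S)) = 1"
        by (simp add: mcoef2_def)
      have m2: "mcoef2 d u (prod.swap (?pos S)) ((a, {}), (b, {})) =
          ip (- (\<Sum>k\<in>r - S. dot (d k) a)) * ip (- (\<Sum>k\<in>S. dot (d k) b))"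
        by (simp add: mcoef2_def mcoef_K_right)
      have cf: "Rcoef ?a' ?b' * ?c (r - S) = ?c S * Rcoef a b * (ip (- (\<Sum>k\<in>r - S. dot (d k) a)) * ip (- (\<Sum>k\<in>S. dot (d k) b)))"
        by (rule Rcoef_reorder[OF G r Sr])
      show "?RT (r - S) ?a' ?b' = ?LT S a b"
        unfolding pos m1 m2 using cf by (simp add: mult.assoc)
    qed
    also have "\<dots> = (\<Sum>S\<in>Pow r. \<Sum>q\<in>Z4sq \<times> Z4sq. ?LT S (fst q) (snd q))"
      by (simp add: sum_Z4sq2)
    finally show "(\<Sum>S\<in>Pow r. \<Sum>q\<in>Z4sq \<times> Z4sq. ?c S * Rcoef (fst q) (snd q) * mcoef2 d u (prod.swap (?pos S)) (?kq q) *
        bvec2 (mres2 (prod.swap (?pos S)) (?kq q)) p)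
      = (\<Sum>q\<in>Z4sq \<times> Z4sq. \<Sum>S\<in>Pow r. Rcoef (fst q) (snd q) * ?c S * mcoef2 d u (?kq q) (?pos S) * bvec2 (mres2 (?kq q) (?pos S)) p)"
      by simp
  qed
qed

lemma Rz_quasi_cocommutative:
  assumes G: "rform_adapted d u t"
  shows "mult2 t d u (flip (Delta t d u h)) Rz = mult2 t d u Rz (Delta t d u h)"
proof -
  have D: "Delta t d u h = (\<lambda>p. \<Sum>b\<in>basis t. h b * Delta_mono d u (fst b) (snd b) p)"
    by (rule ext, rule Delta_expand)
  have F: "flip (Delta t d u h) = (\<lambda>p. \<Sum>b\<in>basis t. h b * flip (Delta_mono d u (fst b) (snd b)) p)"
    unfolding D by (auto simp: flip_def)
  have e: "mult2 t d u (flip (Delta_mono d u (fst b) (snd b))) Rz = mult2 t d u Rz (Delta_mono d u (fst b) (snd b))"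
    if "b \<in> basis t" for b
    using that by (intro Rz_commutes_Delta_mono[OF G]) (auto simp: basis_iff)
  have l: "mult2 t d u (flip (Delta t d u h)) Rz = (\<lambda>p. \<Sum>b\<in>basis t. h b * mult2 t d u (flip (Delta_mono d u (fst b) (snd b))) Rz p)"
    by (subst F, rule mult2_sum_left[OF finite_basis])
  have r: "mult2 t d u Rz (Delta t d u h) = (\<lambda>p. \<Sum>b\<in>basis t. h b * mult2 t d u Rz (Delta_mono d u (fst b) (snd b)) p)"
    by (subst D, rule mult2_sum_right[OF finite_basis])
  show ?thesis
    unfolding l r by (rule ext, rule sum.cong[OF refl]) (simp add: e)
qed

lemma rform_adapted_N1: "rform_adapted (dN1 t1) (uN1 t1) t"
  unfolding rform_adapted_def
proof (intro allI impI conjI)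
  fix k and x :: "int \<times> int" assume "k < t"
  obtain x1 x2 where x: "x = (x1, x2)" by (cases x)
  consider "k < t1" | "\<not> k < t1" "even (k - t1)" | "\<not> k < t1" "odd (k - t1)" by blast
  then show "[rform x (uN1 t1 k) = - dot (dN1 t1 k) x] (mod 4)"
    by cases (simp_all add: cong_iff_dvd_diff rform_def dot_def uN1_def dN1_def x algebra_simps; presburger)+
next
  fix k and x :: "int \<times> int" assume "k < t"
  obtain x1 x2 where x: "x = (x1, x2)" by (cases x)
  consider "k < t1" | "\<not> k < t1" "even (k - t1)" | "\<not> k < t1" "odd (k - t1)" by blast
  then show "[rform (uN1 t1 k) x = dot (dN1 t1 k) x] (mod 4)"
    by cases (simp_all add: cong_iff_dvd_diff rform_def dot_def uN1_def dN1_def x algebra_simps; presburger)+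
qed

section \<open>The Drinfeld element and the ribbon element\<close>

(* Since rform b b = 2 b_2 mod 4, this singles out the Drinfeld element K_1^2. *)
lemma sum_Rcoef_shift_diag:
  assumes c: "c \<in> Z4sq"
  shows "(\<Sum>b\<in>Z4sq. Rcoef (md (vadd b c)) b) = (if c = (2, 0) then 1 else 0)"
proof -
  have "ip (- rform (md (vadd b c)) b) = ip ((- snd c) * fst b + (- (3 * fst c + 2 * snd c + 2)) * snd b)"
    if b: "b \<in> Z4sq" for b
  proof (rule ip_cong)
    have "[- rform (md (vadd b c)) b = - rform (vadd b c) b] (mod 4)" by (intro cong_uminus rform_md_left)
    moreover have "[- rform (vadd b c) b = - (2 * snd b) - rform c b] (mod 4)"
      unfolding rform_vadd_left minus_add_distrib diff_conv_add_uminus[symmetric]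
      by (intro cong_diff cong_uminus rform_diag_cong[OF b] cong_refl)
    moreover have "- (2 * snd b) - rform c b = (- snd c) * fst b + (- (3 * fst c + 2 * snd c + 2)) * snd b"
      by (simp add: rform_def algebra_simps)
    ultimately show "[- rform (md (vadd b c)) b = (- snd c) * fst b + (- (3 * fst c + 2 * snd c + 2)) * snd b] (mod 4)"
      using cong_trans by auto
  qed
  then have "(\<Sum>b\<in>Z4sq. Rcoef (md (vadd b c)) b)
      = (1/16) * (\<Sum>b\<in>Z4sq. ip ((- snd c) * fst b + (- (3 * fst c + 2 * snd c + 2)) * snd b))"
    by (simp add: Rcoef_def sum_distrib_left)
  moreover have "((- snd c) mod 4 = 0 \<and> (- (3 * fst c + 2 * snd c + 2)) mod 4 = 0) \<longleftrightarrow> c = (2, 0)"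
    using c unfolding Z4sq_explicit by auto
  ultimately show ?thesis unfolding sum_ip_linear by auto
qed

lemma drinfeld_Rz: "drinfeld t d u Rz = Kpow (2, 0)"
proof
  fix x
  have "drinfeld t d u Rz x = (\<Sum>q\<in>Z4sq \<times> Z4sq. Rcoef (fst q) (snd q) * mult t d u (Sb t d u (snd q, {})) (bvec (fst q, {})) x)"
    unfolding drinfeld_def Rz_eq_Ktens by (rule Ktens_sum)
  also have "\<dots> = (\<Sum>q\<in>Z4sq \<times> Z4sq. Rcoef (fst q) (snd q) * Kpow (vadd (vneg (snd q)) (fst q)) x)"
  proof (rule sum.cong[OF refl])
    fix q :: "(int \<times> int) \<times> (int \<times> int)" assume q: "q \<in> Z4sq \<times> Z4sq"
    have "fst q \<in> Z4sq" using q by auto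
    then have "bvec (fst q, {}) = Kpow (fst q)" by (simp add: Kpow_def md_id)
    then show "Rcoef (fst q) (snd q) * mult t d u (Sb t d u (snd q, {})) (bvec (fst q, {})) x
        = Rcoef (fst q) (snd q) * Kpow (vadd (vneg (snd q)) (fst q)) x"
      by (simp add: Sb_K mult_Kpow vneg_def)
  qed
  also have "\<dots> = (\<Sum>b\<in>Z4sq. \<Sum>a\<in>Z4sq. Rcoef a b * Kpow (vadd (vneg b) a) x)"
    unfolding sum_Z4sq2 fst_conv snd_conv by (rule sum.swap)
  also have "\<dots> = (\<Sum>b\<in>Z4sq. \<Sum>a\<in>Z4sq. Rcoef (md (vadd b a)) b * Kpow (vadd (vneg b) (md (vadd b a))) x)"
    by (rule sum.cong[OF refl], rule sum_transl_left)
  also have "\<dots> = (\<Sum>b\<in>Z4sq. \<Sum>a\<in>Z4sq. Rcoef (md (vadd b a)) b * Kpow a x)"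
    by (intro sum.cong refl) (simp only: Kpow_def md_vadd_md_right, simp add: vadd_def vneg_def)
  also have "\<dots> = Kpow (2, 0) x"
  proof (cases "\<exists>c. c \<in> Z4sq \<and> x = (c, {})")
    case True
    then obtain c where c: "c \<in> Z4sq" "x = (c, {})" by blast
    have "(\<Sum>b\<in>Z4sq. \<Sum>a\<in>Z4sq. Rcoef (md (vadd b a)) b * Kpow a x) = (\<Sum>b\<in>Z4sq. Rcoef (md (vadd b c)) b)"
      by (rule sum.cong[OF refl], subst sum_single[OF _ c(1)]) (auto simp: Kpow_at c)
    also have "\<dots> = (if c = (2, 0) then 1 else 0)" by (rule sum_Rcoef_shift_diag[OF c(1)])
    also have "\<dots> = Kpow (2, 0) x" using c by (auto simp: Kpow_def bvec_def md_def)
    finally show ?thesis .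
  next
    case False
    have "Kpow a x = 0" if "a \<in> Z4sq" for a
    proof -
      have "x \<noteq> (a, {})" using False that by blast
      then show ?thesis using that by (simp add: Kpow_at)
    qed
    then have "(\<Sum>b\<in>Z4sq. \<Sum>a\<in>Z4sq. Rcoef (md (vadd b a)) b * Kpow a x) = 0" by simp
    moreover have "Kpow (2, 0) x = 0" using False by (auto simp: Kpow_def bvec_def md_def Z4sq_def)
    ultimately show ?thesis by simp
  qed
  finally show "drinfeld t d u Rz x = Kpow (2, 0) x" .
qed

lemma triangular_R_matrix_Rz:
  assumes "rform_adapted d u t"
  shows "triangular_R_matrix t d u Rz"
  unfolding triangular_R_matrix_def R_matrix_def
  using Rz_in_carrier2 flip_in_carrier2[OF Rz_in_carrier2] Rz_mult_flip_Rz Rz_triangular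
    Rz_quasi_cocommutative[OF assms] Rz_hexagon_left Rz_hexagon_right by blast

lemma ribbon_element_one:
  assumes tri: "mult2 t d u (flip R) R = one2"
    and uSu: "mult t d u (drinfeld t d u R) (antipode t d u (drinfeld t d u R)) = one"
  shows "ribbon_element t d u R one"
  unfolding ribbon_element_def
proof (intro conjI ballI bexI[where x = one] bexI[where x = one2])
  show "antipode t d u one = one"
    unfolding Kpow_zero[symmetric] antipode_Kpow Sb_K by (simp add: md_def)
  show "mult t d u one one = mult t d u (drinfeld t d u R) (antipode t d u (drinfeld t d u R))"
    by (simp add: uSu mult_one_left one_in_carrier)
  show "Delta t d u one = mult2 t d u one2 (tens one one)"
    by (simp add: Delta_one mult2_one2 one2_def[symmetric])
qed (simp_all add: mult_one_left mult_one_right one_in_carrier counit_one one2_in_carrier2 tri mult2_one2)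

lemma drinfeld_Rz_mult_antipode: "mult t d u (drinfeld t d u Rz) (antipode t d u (drinfeld t d u Rz)) = one"
  unfolding drinfeld_Rz antipode_Kpow Sb_K mult_Kpow by (simp add: md_def vadd_def Kpow_zero)

theorem mainTheorem6:
  fixes t1 t2 :: nat
  assumes "4 dvd t1" and "t1 > 0" and "t2 \<ge> 1"
  shows "(two_sided_cointegral (tN1 t1 t2) (dN1 t1) (uN1 t1) (LambdaN1 t1 t2) \<and>
          two_sided_integral (tN1 t1 t2) (dN1 t1) (uN1 t1) (lambdaN1 t1 t2) \<and>
          unimodular (tN1 t1 t2) (dN1 t1) (uN1 t1)) \<and>
         triangular_R_matrix (tN1 t1 t2) (dN1 t1) (uN1 t1) Rz \<and>
         (ribbon_element (tN1 t1 t2) (dN1 t1) (uN1 t1) Rz one \<and>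
          one = mult (tN1 t1 t2) (dN1 t1) (uN1 t1) (Kpow (-2, 0))
                  (drinfeld (tN1 t1 t2) (dN1 t1) (uN1 t1) Rz))"
proof -
  let ?t = "tN1 t1 t2" and ?d = "dN1 t1" and ?u = "uN1 t1"
  have R: "triangular_R_matrix ?t ?d ?u Rz"
    by (rule triangular_R_matrix_Rz[OF rform_adapted_N1])
  moreover have "ribbon_element ?t ?d ?u Rz one"
    using R by (intro ribbon_element_one drinfeld_Rz_mult_antipode) (simp add: triangular_R_matrix_def)
  moreover have "one = mult ?t ?d ?u (Kpow (-2, 0)) (drinfeld ?t ?d ?u Rz)"
    by (simp add: drinfeld_Rz mult_Kpow vadd_def Kpow_zero)
  ultimately show ?thesis using N1_integrals[OF assms(1)] by blast
qed

end
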